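(* Let $(N_t)$ be a local martingale of class $(\mathcal C_0)$ with $N_0=1$, $S_t=\sup_{s\le t}N_s$, $S_\infty=\lim_t S_t$, and $\mu_t=\mathbf E[\log S_\infty\mid\mathcal F_t]$ (càdlàg version). Then for all $t\ge0$, $\log S_t=\sup_{s\le t}\mu_s-1$, equivalently $S_t=\exp(\overline\mu_t-1)$ with $\overline\mu_t=\sup_{s\le t}\mu_s$. Moreover $1-\frac{N_t}{S_t}=\overline\mu_t-\mu_t$.
   Context: Filtered probability space satisfying the usual hypotheses. Class $(\mathcal C_0)$: strictly positive $(\mathcal F_t)$ local martingales with no positive jumps tending to $0$ a.s. at infinity. *)

theory Defs
  imports "HOL-Probability.Probability"
begin

text \<open>Continuous-time stochastic processes indexed by time t \<ge> 0 (type real).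
  A process is a map X :: real \<Rightarrow> 'a \<Rightarrow> real; only times t \<ge> 0 matter.\<close>

definition usual_filtration :: "'a measure \<Rightarrow> (real \<Rightarrow> 'a measure) \<Rightarrow> bool" where
  "usual_filtration M F \<longleftrightarrow>
     prob_space M \<and>
     (\<forall>A\<in>null_sets M. \<forall>B. B \<subseteq> A \<longrightarrow> B \<in> sets M) \<and>
     (\<forall>t\<ge>0. subalgebra M (F t)) \<and>
     (\<forall>s t. 0 \<le> s \<longrightarrow> s \<le> t \<longrightarrow> sets (F s) \<subseteq> sets (F t)) \<and>
     null_sets M \<subseteq> sets (F 0) \<and>
     (\<forall>t\<ge>0. sets (F t) = (\<Inter>s\<in>{t<..}. sets (F s)))"

definition adapted :: "(real \<Rightarrow> 'a measure) \<Rightarrow> (real \<Rightarrow> 'a \<Rightarrow> real) \<Rightarrow> bool" where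
  "adapted F X \<longleftrightarrow> (\<forall>t\<ge>0. X t \<in> borel_measurable (F t))"

definition cadlag :: "(real \<Rightarrow> real) \<Rightarrow> bool" where
  "cadlag f \<longleftrightarrow> (\<forall>t\<ge>0. continuous (at_right t) f) \<and>
                 (\<forall>t>0. \<exists>l. (f \<longlongrightarrow> l) (at_left t))"

definition cadlag_process :: "'a measure \<Rightarrow> (real \<Rightarrow> 'a \<Rightarrow> real) \<Rightarrow> bool" where
  "cadlag_process M X \<longleftrightarrow> (AE \<omega> in M. cadlag (\<lambda>t. X t \<omega>))"

definition martingale :: "'a measure \<Rightarrow> (real \<Rightarrow> 'a measure) \<Rightarrow> (real \<Rightarrow> 'a \<Rightarrow> real) \<Rightarrow> bool" where
  "martingale M F X \<longleftrightarrow> adapted F X \<and> (\<forall>t\<ge>0. integrable M (X t)) \<and>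
     (\<forall>s t. 0 \<le> s \<longrightarrow> s \<le> t \<longrightarrow> (AE \<omega> in M. real_cond_exp M (F s) (X t) \<omega> = X s \<omega>))"

definition stopping_time_ext :: "(real \<Rightarrow> 'a measure) \<Rightarrow> ('a \<Rightarrow> ereal) \<Rightarrow> bool" where
  "stopping_time_ext F T \<longleftrightarrow> (\<forall>t\<ge>0. Measurable.pred (F t) (\<lambda>\<omega>. T \<omega> \<le> ereal t))"

definition stopped_process :: "('a \<Rightarrow> ereal) \<Rightarrow> (real \<Rightarrow> 'a \<Rightarrow> real) \<Rightarrow> real \<Rightarrow> 'a \<Rightarrow> real" where
  "stopped_process T X t \<omega> = (if T \<omega> \<le> ereal t then X (real_of_ereal (T \<omega>)) \<omega> else X t \<omega>)"

definition local_martingale :: "'a measure \<Rightarrow> (real \<Rightarrow> 'a measure) \<Rightarrow> (real \<Rightarrow> 'a \<Rightarrow> real) \<Rightarrow> bool" where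
  "local_martingale M F X \<longleftrightarrow> adapted F X \<and> cadlag_process M X \<and>
     (\<exists>T :: nat \<Rightarrow> 'a \<Rightarrow> ereal.
        (\<forall>n. stopping_time_ext F (T n)) \<and>
        (\<forall>n. \<forall>\<omega>\<in>space M. 0 \<le> T n \<omega>) \<and>
        (AE \<omega> in M. incseq (\<lambda>n. T n \<omega>) \<and> (\<lambda>n. T n \<omega>) \<longlonglongrightarrow> \<infinity>) \<and>
        (\<forall>n. martingale M F (stopped_process (T n) X)))"

definition class_C0 :: "'a measure \<Rightarrow> (real \<Rightarrow> 'a measure) \<Rightarrow> (real \<Rightarrow> 'a \<Rightarrow> real) \<Rightarrow> bool" where
  "class_C0 M F X \<longleftrightarrow> local_martingale M F X \<and>
     (\<forall>t\<ge>0. \<forall>\<omega>\<in>space M. 0 < X t \<omega>) \<and>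
     (AE \<omega> in M. \<forall>t>0. X t \<omega> \<le> Lim (at_left t) (\<lambda>s. X s \<omega>)) \<and>
     (AE \<omega> in M. ((\<lambda>t. X t \<omega>) \<longlongrightarrow> 0) at_top)"

definition running_sup :: "(real \<Rightarrow> 'a \<Rightarrow> real) \<Rightarrow> real \<Rightarrow> 'a \<Rightarrow> real" where
  "running_sup X t \<omega> = (SUP s\<in>{0..t}. X s \<omega>)"

definition terminal_sup :: "(real \<Rightarrow> 'a \<Rightarrow> real) \<Rightarrow> 'a \<Rightarrow> real" where
  "terminal_sup X \<omega> = Lim at_top (\<lambda>t. running_sup X t \<omega>)"

end

theory Submission
  imports Defs
begin

text \<open>Fix a time \<open>t\<close> and a level \<open>y \<ge> S\<^sub>t\<close>. Having no positive jumps, \<open>N\<close> equals \<open>y\<close> at its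
  first passage above \<open>y\<close>. Optional stopping there (for each martingale of a localising sequence,
  then removing the localisation) and letting the horizon tend to infinity, while \<open>N \<rightarrow> 0\<close>, give
  Doob's maximal identity \<open>P(S\<^sub>\<infinity> > y | F\<^sub>t) = N\<^sub>t / y\<close> on \<open>{S\<^sub>t \<le> y}\<close>. Integrating it against
  \<open>dy / y\<close> over \<open>y \<ge> S\<^sub>t\<close> yields \<open>E[log S\<^sub>\<infinity> | F\<^sub>t] = log S\<^sub>t + N\<^sub>t / S\<^sub>t\<close>. Hence
  \<open>\<mu>\<^sub>t = log S\<^sub>t + N\<^sub>t / S\<^sub>t\<close> almost surely at every rational time, and then at all times by
  right-continuity. Finally \<open>N\<^sub>s / S\<^sub>s \<le> 1\<close>, with values close to \<open>1\<close> wherever \<open>N\<close> nearly attains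
  its running maximum, so the supremum of \<open>\<mu>\<close> over \<open>[0, t]\<close> is \<open>log S\<^sub>t + 1\<close>.

  Optional stopping for right-continuous martingales is reduced to stopping times with finitely many
  values by approximating from above along dyadic grids.\<close>

section \<open>Cadlag paths, running suprema and first passages\<close>

definition no_positive_jumps :: "(real \<Rightarrow> real) \<Rightarrow> bool" where
  "no_positive_jumps f \<longleftrightarrow> (\<forall>t>0. f t \<le> Lim (at_left t) f)"

lemma cadlag_tendsto_at_right:
  assumes "cadlag f" "0 \<le> s"
  shows "(f \<longlongrightarrow> f s) (at_right s)"
  using assms unfolding cadlag_def by (simp add: continuous_within)

lemma cadlag_locally_bdd_above:
  assumes "cadlag f" "0 \<le> s"
  obtains d B where "d > 0" "\<And>x. 0 \<le> x \<Longrightarrow> \<bar>x - s\<bar> < d \<Longrightarrow> f x \<le> B"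
proof -
  have "eventually (\<lambda>x. f x < f s + 1) (at_right s)"
    using cadlag_tendsto_at_right[OF assms] by (rule order_tendstoD) simp
  then obtain b where b: "b > s" "\<And>x. s < x \<Longrightarrow> x < b \<Longrightarrow> f x < f s + 1"
    unfolding eventually_at_right_field by blast
  obtain c L where c: "c < s" "\<And>x. c < x \<Longrightarrow> x < s \<Longrightarrow> 0 \<le> x \<Longrightarrow> f x < L"
  proof (cases "s = 0")
    case True
    then show ?thesis using that[of "-1" 0] by auto
  next
    case False
    with assms obtain l where "(f \<longlongrightarrow> l) (at_left s)"
      unfolding cadlag_def by fastforce
    then have "eventually (\<lambda>x. f x < l + 1) (at_left s)"
      by (rule order_tendstoD) simp
    then obtain c where "c < s" "\<And>x. c < x \<Longrightarrow> x < s \<Longrightarrow> f x < l + 1"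
      unfolding eventually_at_left_field by blast
    then show ?thesis using that[of c "l + 1"] by auto
  qed
  show ?thesis
  proof
    show "min (b - s) (s - c) > 0" using b c by simp
    fix x assume "0 \<le> x" "\<bar>x - s\<bar> < min (b - s) (s - c)"
    then show "f x \<le> max (f s + 1) L"
      using b(2)[of x] c(2)[of x] by (cases x s rule: linorder_cases) auto
  qed
qed

lemma cadlag_bdd_above_interval:
  assumes "cadlag f"
  shows "bdd_above (f ` {0..t})"
proof -
  have "\<forall>s\<in>{0..t}. \<exists>d>0. \<exists>B. \<forall>x. 0 \<le> x \<and> \<bar>x - s\<bar> < d \<longrightarrow> f x \<le> B"
    by (metis atLeastAtMost_iff assms cadlag_locally_bdd_above)
  then obtain d B where dB: "\<And>s. s \<in> {0..t} \<Longrightarrow> d s > 0"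
     "\<And>s x. s \<in> {0..t} \<Longrightarrow> 0 \<le> x \<Longrightarrow> \<bar>x - s\<bar> < d s \<Longrightarrow> f x \<le> B s"
    by metis
  have "compact {0..t}" "\<And>s. open (ball s (d s))" by simp_all
  moreover have "{0..t} \<subseteq> (\<Union>s\<in>{0..t}. ball s (d s))"
    using dB(1) by force
  ultimately obtain D where D: "D \<subseteq> {0..t}" "finite D" "{0..t} \<subseteq> (\<Union>s\<in>D. ball s (d s))"
    by (rule compactE_image) blast
  show ?thesis
  proof (rule bdd_aboveI2)
    fix x assume x: "x \<in> {0..t}"
    then obtain s where s: "s \<in> D" "x \<in> ball s (d s)" using D by blast
    then have "f x \<le> B s" using dB(2)[of s x] D x by (auto simp: dist_real_def)
    also have "B s \<le> Max (B ` D)" using s D by simp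
    finally show "f x \<le> Max (B ` D)" .
  qed
qed

lemma cadlag_bdd_above_atLeast:
  assumes "cadlag f" "(f \<longlongrightarrow> 0) at_top"
  shows "bdd_above (f ` {0..})"
proof -
  have "eventually (\<lambda>x. f x < 1) at_top" using assms(2) by (rule order_tendstoD) simp
  then obtain R where R: "\<And>x. x \<ge> R \<Longrightarrow> f x < 1" unfolding eventually_at_top_linorder by blast
  obtain B where B: "\<And>x. x \<in> {0..max R 0} \<Longrightarrow> f x \<le> B"
    using cadlag_bdd_above_interval[OF assms(1), of "max R 0"] unfolding bdd_above_def by fastforce
  show ?thesis
  proof (rule bdd_aboveI2)
    fix x :: real assume "x \<in> {0..}"
    then show "f x \<le> max B 1"
    proof (cases "x \<le> max R 0")
      case False
      then have "R \<le> x" by (simp add: max_def split: if_splits)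
      then show ?thesis using R[of x] by (simp add: le_max_iff_disj)
    qed (use B[of x] in auto)
  qed
qed

lemma cadlag_exists_rational_above:
  assumes "cadlag f" "0 \<le> s" "s < r" "c < f s"
  shows "\<exists>q\<in>\<rat>. s < q \<and> q < r \<and> c < f q"
proof -
  have "eventually (\<lambda>x. c < f x) (at_right s)"
    using cadlag_tendsto_at_right[OF assms(1,2)] assms(4) by (rule order_tendstoD)
  then obtain b where b: "b > s" "\<And>x. s < x \<Longrightarrow> x < b \<Longrightarrow> c < f x"
    unfolding eventually_at_right_field by blast
  obtain q where "q \<in> \<rat>" "s < q" "q < min b r"
    using Rats_dense_in_real[of s "min b r"] b assms by auto
  then show ?thesis using b by auto
qed

lemma cadlag_exceeds_iff_rational:
  assumes "cadlag f" "0 \<le> t"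
  shows "(\<exists>s. t \<le> s \<and> s < r \<and> y < f s) \<longleftrightarrow> (\<exists>q\<in>\<rat>. t \<le> q \<and> q < r \<and> y < f q)"
proof
  assume "\<exists>s. t \<le> s \<and> s < r \<and> y < f s"
  then obtain s where s: "t \<le> s" "s < r" "y < f s" by blast
  then obtain q where "q \<in> \<rat>" "s < q" "q < r" "y < f q"
    using cadlag_exists_rational_above[OF assms(1), of s r y] assms(2) by auto
  then show "\<exists>q\<in>\<rat>. t \<le> q \<and> q < r \<and> y < f q" using s(1) by (intro bexI[of _ q]) auto
qed auto

lemma right_continuous_eq_on_rationals:
  fixes f g :: "real \<Rightarrow> real"
  assumes "continuous (at_right t) f" "continuous (at_right t) g"
    and "\<And>q. q \<in> \<rat> \<Longrightarrow> t < q \<Longrightarrow> f q = g q"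
  shows "f t = g t"
proof (rule ccontr)
  assume "f t \<noteq> g t"
  have "((\<lambda>s. f s - g s) \<longlongrightarrow> f t - g t) (at_right t)"
    using assms(1,2) unfolding continuous_within by (rule tendsto_diff)
  then have "eventually (\<lambda>s. f s - g s \<noteq> 0) (at_right t)"
    by (rule tendsto_imp_eventually_ne) (use \<open>f t \<noteq> g t\<close> in simp)
  then obtain b where "b > t" "\<And>s. t < s \<Longrightarrow> s < b \<Longrightarrow> f s \<noteq> g s"
    unfolding eventually_at_right_field by auto
  moreover obtain q where "q \<in> \<rat>" "t < q" "q < b"
    using Rats_dense_in_real \<open>b > t\<close> by blast
  ultimately show False using assms(3) by blast
qed

lemma stopped_path_continuous_at_right:
  fixes f :: "real \<Rightarrow> real" and T :: ereal
  assumes "cadlag f" "0 \<le> a" "0 \<le> T"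
  shows "continuous (at_right a) (\<lambda>s. if T \<le> ereal s then f (real_of_ereal T) else f s)"
    (is "continuous _ ?g")
  unfolding continuous_within
proof (cases "T \<le> ereal a")
  case True
  have "eventually (\<lambda>s. ?g s = ?g a) (at_right a)"
    using eventually_at_right_less[of a]
    by eventually_elim (use True in \<open>auto intro: order_trans\<close>)
  then show "(?g \<longlongrightarrow> ?g a) (at_right a)" by (rule tendsto_eventually)
next
  case False
  have "eventually (\<lambda>s. \<not> T \<le> ereal s) (at_right a)"
  proof (cases T)
    case (real r)
    with False have "a < r" by simp
    then have "eventually (\<lambda>s. s < r) (at_right a)"
      unfolding eventually_at_right_field by (intro exI[of _ r]) auto
    then show ?thesis by eventually_elim (use real in auto)
  qed (use False in auto)
  then have "eventually (\<lambda>s. f s = ?g s) (at_right a)" by eventually_elim simp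
  from tendsto_cong[OF this] cadlag_tendsto_at_right[OF assms(1,2)]
  show "(?g \<longlongrightarrow> ?g a) (at_right a)" using False by simp
qed

lemma running_sup_upper:
  "cadlag (\<lambda>s. X s \<omega>) \<Longrightarrow> 0 \<le> s \<Longrightarrow> s \<le> t \<Longrightarrow> X s \<omega> \<le> running_sup X t \<omega>"
  unfolding running_sup_def by (rule cSUP_upper[OF _ cadlag_bdd_above_interval]) auto

lemma running_sup_least:
  "0 \<le> t \<Longrightarrow> (\<And>s. 0 \<le> s \<Longrightarrow> s \<le> t \<Longrightarrow> X s \<omega> \<le> c) \<Longrightarrow> running_sup X t \<omega> \<le> c"
  unfolding running_sup_def by (rule cSUP_least) auto

lemma running_sup_leD:
  "cadlag (\<lambda>s. X s \<omega>) \<Longrightarrow> running_sup X t \<omega> \<le> y \<Longrightarrow> \<forall>s\<in>{0..t}. X s \<omega> \<le> y"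
  using running_sup_upper[of X \<omega>] by fastforce

lemma running_sup_mono:
  "cadlag (\<lambda>s. X s \<omega>) \<Longrightarrow> 0 \<le> s \<Longrightarrow> s \<le> t \<Longrightarrow> running_sup X s \<omega> \<le> running_sup X t \<omega>"
  by (rule running_sup_least) (auto intro: running_sup_upper)

lemma running_sup_continuous_at_right:
  assumes c: "cadlag (\<lambda>s. X s \<omega>)" and t: "0 \<le> t"
  shows "continuous (at_right t) (\<lambda>s. running_sup X s \<omega>)"
  unfolding continuous_within
proof (rule order_tendstoI)
  fix a assume a: "a < running_sup X t \<omega>"
  show "eventually (\<lambda>s. a < running_sup X s \<omega>) (at_right t)"
    using eventually_at_right_less[of t]
  proof eventually_elim
    case (elim s)
    then show ?case using a running_sup_mono[of X \<omega>, OF c t, of s] by simp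
  qed
next
  fix a assume a: "running_sup X t \<omega> < a"
  define e where "e = (a - running_sup X t \<omega>) / 2"
  have e: "e > 0" "running_sup X t \<omega> + e < a" using a by (simp_all add: e_def field_simps)
  have "eventually (\<lambda>s. X s \<omega> < X t \<omega> + e) (at_right t)"
    using cadlag_tendsto_at_right[OF c t] by (rule order_tendstoD) (use e in simp)
  then obtain b where b: "b > t" "\<And>s. t < s \<Longrightarrow> s < b \<Longrightarrow> X s \<omega> < X t \<omega> + e"
    unfolding eventually_at_right_field by blast
  have Xt: "X t \<omega> \<le> running_sup X t \<omega>" by (rule running_sup_upper[of X \<omega>, OF c t order_refl])
  show "eventually (\<lambda>s. running_sup X s \<omega> < a) (at_right t)"
    unfolding eventually_at_right_field
  proof (intro exI[of _ b] conjI allI impI)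
    fix x assume x: "t < x" "x < b"
    have "running_sup X x \<omega> \<le> running_sup X t \<omega> + e"
    proof (rule running_sup_least)
      fix s assume s: "0 \<le> s" "s \<le> x"
      show "X s \<omega> \<le> running_sup X t \<omega> + e"
      proof (cases "s \<le> t")
        case True
        then show ?thesis using running_sup_upper[of X \<omega>, OF c s(1) True] e by linarith
      next
        case False
        then show ?thesis using b(2)[of s] s x Xt by simp
      qed
    qed (use x t in simp)
    then show "running_sup X x \<omega> < a" using e by linarith
  qed (rule b)
qed

lemma running_sup_tendsto_SUP:
  assumes c: "cadlag (\<lambda>s. X s \<omega>)" and z: "((\<lambda>s. X s \<omega>) \<longlongrightarrow> 0) at_top"
  shows "((\<lambda>t. running_sup X t \<omega>) \<longlongrightarrow> (SUP s\<in>{0..}. X s \<omega>)) at_top"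
proof (rule order_tendstoI)
  have bdd: "bdd_above ((\<lambda>s. X s \<omega>) ` {0..})" by (rule cadlag_bdd_above_atLeast[OF c z])
  fix a assume "a < (SUP s\<in>{0..}. X s \<omega>)"
  then obtain s where s: "0 \<le> s" "a < X s \<omega>"
    using less_cSUP_iff[of "{0..}" "\<lambda>s. X s \<omega>" a] bdd by auto
  show "eventually (\<lambda>t. a < running_sup X t \<omega>) at_top"
    unfolding eventually_at_top_linorder
    using s running_sup_upper[of X \<omega>, OF c s(1)] by (intro exI[of _ s]) (auto intro: less_le_trans)
next
  have bdd: "bdd_above ((\<lambda>s. X s \<omega>) ` {0..})" by (rule cadlag_bdd_above_atLeast[OF c z])
  fix a assume a: "(SUP s\<in>{0..}. X s \<omega>) < a"
  have "running_sup X t \<omega> \<le> (SUP s\<in>{0..}. X s \<omega>)" if "0 \<le> t" for t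
    by (rule running_sup_least) (use that bdd in \<open>auto intro: cSUP_upper\<close>)
  then show "eventually (\<lambda>t. running_sup X t \<omega> < a) at_top"
    unfolding eventually_at_top_linorder using a by (intro exI[of _ 0]) force
qed

lemma terminal_sup_eq_SUP:
  "cadlag (\<lambda>s. X s \<omega>) \<Longrightarrow> ((\<lambda>s. X s \<omega>) \<longlongrightarrow> 0) at_top \<Longrightarrow>
    terminal_sup X \<omega> = (SUP s\<in>{0..}. X s \<omega>)"
  unfolding terminal_sup_def by (rule tendsto_Lim) (auto intro: running_sup_tendsto_SUP)

lemma running_sup_le_terminal_sup:
  assumes "cadlag (\<lambda>s. X s \<omega>)" "((\<lambda>s. X s \<omega>) \<longlongrightarrow> 0) at_top" "0 \<le> t"
  shows "running_sup X t \<omega> \<le> terminal_sup X \<omega>"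
  unfolding terminal_sup_eq_SUP[of X \<omega>, OF assms(1,2)]
  by (rule running_sup_least) (use assms in \<open>auto intro: cSUP_upper cadlag_bdd_above_atLeast\<close>)

lemma less_terminal_sup_iff:
  assumes "cadlag (\<lambda>s. X s \<omega>)" "((\<lambda>s. X s \<omega>) \<longlongrightarrow> 0) at_top"
  shows "x < terminal_sup X \<omega> \<longleftrightarrow> (\<exists>s\<ge>0. x < X s \<omega>)"
  unfolding terminal_sup_eq_SUP[of X \<omega>, OF assms]
  using less_cSUP_iff[OF _ cadlag_bdd_above_atLeast[OF assms], of x] by auto

lemma running_sup_eq_SUP_rationals:
  assumes c: "cadlag (\<lambda>s. X s \<omega>)" and t: "0 \<le> t"
  shows "running_sup X t \<omega> = (SUP s\<in>insert t ({0..t} \<inter> \<rat>). X s \<omega>)"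
    (is "_ = (SUP s\<in>?Q. X s \<omega>)")
proof (rule antisym)
  have bdd: "bdd_above ((\<lambda>s. X s \<omega>) ` ?Q)"
    by (rule bdd_above_mono[OF cadlag_bdd_above_interval[OF c, of t]]) (use t in auto)
  show "running_sup X t \<omega> \<le> (SUP s\<in>?Q. X s \<omega>)"
  proof (rule running_sup_least[OF t], rule ccontr)
    fix s assume s: "0 \<le> s" "s \<le> t" "\<not> X s \<omega> \<le> (SUP s\<in>?Q. X s \<omega>)"
    have "X t \<omega> \<le> (SUP s\<in>?Q. X s \<omega>)" using bdd by (intro cSUP_upper) auto
    then have "s \<noteq> t" using s(3) by auto
    with s(2) have "s < t" by simp
    moreover have "(SUP s\<in>?Q. X s \<omega>) < X s \<omega>" using s(3) by simp
    ultimately obtain q where "q \<in> \<rat>" "s < q" "q < t" "(SUP s\<in>?Q. X s \<omega>) < X q \<omega>"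
      using cadlag_exists_rational_above[OF c s(1)] by blast
    moreover have "X q \<omega> \<le> (SUP s\<in>?Q. X s \<omega>)"
      using bdd \<open>q \<in> \<rat>\<close> \<open>s < q\<close> \<open>q < t\<close> s(1) by (intro cSUP_upper) auto
    ultimately show False by simp
  qed
  show "(SUP s\<in>?Q. X s \<omega>) \<le> running_sup X t \<omega>"
    using t by (intro cSUP_least) (auto intro: running_sup_upper[of X \<omega>, OF c])
qed

lemma SUP_log_running_sup_add_ratio:
  assumes c: "cadlag (\<lambda>s. X s \<omega>)" and pos: "\<And>s. 0 \<le> s \<Longrightarrow> 0 < X s \<omega>" and t: "0 \<le> t"
  shows "(SUP s\<in>{0..t}. ln (running_sup X s \<omega>) + X s \<omega> / running_sup X s \<omega>)
       = ln (running_sup X t \<omega>) + 1"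
proof -
  define S where "S = running_sup X t \<omega>"
  have S_pos: "0 < running_sup X s \<omega>" if "0 \<le> s" for s
    using pos[OF that] running_sup_upper[of X \<omega>, OF c that order_refl] by linarith
  have term_le: "ln (running_sup X s \<omega>) + X s \<omega> / running_sup X s \<omega> \<le> ln S + 1"
    if s: "0 \<le> s" "s \<le> t" for s
  proof -
    have "ln (running_sup X s \<omega>) \<le> ln S"
      using S_pos[OF s(1)] running_sup_mono[of X \<omega>, OF c s] by (simp add: S_def)
    moreover have "X s \<omega> / running_sup X s \<omega> \<le> 1"
      using S_pos[OF s(1)] running_sup_upper[of X \<omega>, OF c s(1) order_refl] by simp
    ultimately show ?thesis by linarith
  qed
  have bdd: "bdd_above ((\<lambda>s. ln (running_sup X s \<omega>) + X s \<omega> / running_sup X s \<omega>) ` {0..t})"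
    using term_le by (intro bdd_aboveI2) auto
  have "ln x + x / S \<le> (SUP s\<in>{0..t}. ln (running_sup X s \<omega>) + X s \<omega> / running_sup X s \<omega>)"
    if "x \<in> (\<lambda>s. X s \<omega>) ` {0..t}" for x
  proof -
    obtain s where s: "0 \<le> s" "s \<le> t" "x = X s \<omega>" using \<open>x \<in> _\<close> by auto
    have "ln x \<le> ln (running_sup X s \<omega>)"
      using s pos[OF s(1)] running_sup_upper[of X \<omega>, OF c s(1) order_refl] by simp
    moreover have "x / S \<le> X s \<omega> / running_sup X s \<omega>"
      using s pos[OF s(1)] S_pos[OF s(1)] running_sup_mono[of X \<omega>, OF c s(1,2)]
      by (simp add: S_def frac_le)
    moreover have "ln (running_sup X s \<omega>) + X s \<omega> / running_sup X s \<omega>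
        \<le> (SUP s\<in>{0..t}. ln (running_sup X s \<omega>) + X s \<omega> / running_sup X s \<omega>)"
      using s bdd by (intro cSUP_upper) auto
    ultimately show ?thesis by linarith
  qed
  moreover have "S \<in> closure ((\<lambda>s. X s \<omega>) ` {0..t})"
    unfolding S_def running_sup_def
    using t cadlag_bdd_above_interval[OF c] by (intro closure_contains_Sup) auto
  then obtain x where x: "\<And>n. x n \<in> (\<lambda>s. X s \<omega>) ` {0..t}" "x \<longlonglongrightarrow> S"
    unfolding closure_sequential by blast
  moreover have "0 < S" unfolding S_def by (rule S_pos[OF t])
  then have "(\<lambda>n. ln (x n) + x n / S) \<longlonglongrightarrow> ln S + S / S"
    by (intro tendsto_intros x(2)) auto
  ultimately have "ln S + S / S \<le> (SUP s\<in>{0..t}. ln (running_sup X s \<omega>) + X s \<omega> / running_sup X s \<omega>)"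
    by (intro LIMSEQ_le_const2) auto
  then show ?thesis
    using \<open>0 < S\<close> term_le t by (intro antisym cSUP_least) (auto simp: S_def)
qed

lemma less_terminal_sup_iff_after:
  assumes c: "cadlag (\<lambda>s. X s \<omega>)" and z: "((\<lambda>s. X s \<omega>) \<longlongrightarrow> 0) at_top"
    and t: "0 \<le> t" and le: "running_sup X t \<omega> \<le> y"
  shows "y < terminal_sup X \<omega> \<longleftrightarrow> (\<exists>s\<ge>t. y < X s \<omega>)"
  unfolding less_terminal_sup_iff[of X \<omega>, OF c z]
proof
  assume "\<exists>s\<ge>0. y < X s \<omega>"
  then obtain s where s: "0 \<le> s" "y < X s \<omega>" by blast
  have "X s \<omega> \<le> y" if "s \<le> t" using running_sup_upper[of X \<omega>, OF c s(1) that] le by linarith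
  then have "t \<le> s" using s(2) by (cases "s \<le> t") auto
  then show "\<exists>s\<ge>t. y < X s \<omega>" using s(2) by blast
next
  assume "\<exists>s\<ge>t. y < X s \<omega>"
  then obtain s where "t \<le> s" "y < X s \<omega>" by blast
  with t show "\<exists>s\<ge>0. y < X s \<omega>" by (intro exI[of _ s]) auto
qed

text \<open>\<open>Inf {}\<close> is unspecified, so \<open>first_passage f t y\<close> is meaningful only if \<open>f\<close> exceeds
  \<open>y\<close> after \<open>t\<close>; \<open>first_passage_upto\<close> only uses it in that case.\<close>

definition first_passage :: "(real \<Rightarrow> real) \<Rightarrow> real \<Rightarrow> real \<Rightarrow> real" where
  "first_passage f t y = Inf {s. t \<le> s \<and> y < f s}"

definition first_passage_upto :: "(real \<Rightarrow> real) \<Rightarrow> real \<Rightarrow> real \<Rightarrow> real \<Rightarrow> real" where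
  "first_passage_upto f t y u =
    (if \<exists>s. t \<le> s \<and> s \<le> u \<and> y < f s then first_passage f t y else u)"

lemma first_passage_ge: "\<exists>s\<ge>t. y < f s \<Longrightarrow> t \<le> first_passage f t y"
  unfolding first_passage_def by (intro cInf_greatest) auto

lemma first_passage_le: "t \<le> s \<Longrightarrow> y < f s \<Longrightarrow> first_passage f t y \<le> s"
  unfolding first_passage_def by (intro cInf_lower) (auto intro: bdd_belowI[of _ t])

lemma first_passage_less_iff:
  assumes "\<exists>s\<ge>t. y < f s"
  shows "first_passage f t y < r \<longleftrightarrow> (\<exists>s. t \<le> s \<and> s < r \<and> y < f s)"
proof -
  have "bdd_below {s. t \<le> s \<and> y < f s}" by (rule bdd_belowI[of _ t]) auto
  then show ?thesis
    unfolding first_passage_def using cInf_less_iff[of "{s. t \<le> s \<and> y < f s}" r] assms by auto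
qed

lemma le_before_first_passage:
  assumes "\<forall>s\<in>{0..t}. f s \<le> y" "0 \<le> s" "s < first_passage f t y"
  shows "f s \<le> y"
proof (rule ccontr)
  assume "\<not> f s \<le> y"
  with assms(1,2) have "t \<le> s" by (cases "s \<le> t") auto
  then have "first_passage f t y \<le> s" using \<open>\<not> f s \<le> y\<close> by (intro first_passage_le) auto
  with assms(3) show False by simp
qed

lemma first_passage_value:
  assumes c: "cadlag f" and nj: "no_positive_jumps f" and t: "0 \<le> t"
    and below: "\<forall>s\<in>{0..t}. f s \<le> y" and ex: "\<exists>s\<ge>t. y < f s"
  shows "f (first_passage f t y) = y"
proof -
  define \<tau> where "\<tau> = first_passage f t y"
  have t\<tau>: "t \<le> \<tau>" unfolding \<tau>_def by (rule first_passage_ge[OF ex])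
  have "f \<tau> \<le> y"
  proof (cases "\<tau> = t")
    case True
    then show ?thesis using t below by auto
  next
    case False
    then have "0 < \<tau>" using t\<tau> t by simp
    then obtain l where l: "(f \<longlongrightarrow> l) (at_left \<tau>)" using c unfolding cadlag_def by blast
    have "eventually (\<lambda>s. s \<in> {t<..<\<tau>}) (at_left \<tau>)"
      using False t\<tau> by (intro eventually_at_left_real) simp
    then have "eventually (\<lambda>s. f s \<le> y) (at_left \<tau>)"
      by eventually_elim (use le_before_first_passage[OF below] t in \<open>auto simp: \<tau>_def\<close>)
    then have "l \<le> y" using l by (intro tendsto_upperbound[of f l "at_left \<tau>"]) auto
    moreover have "Lim (at_left \<tau>) f = l" using l by (intro tendsto_Lim) auto
    moreover have "f \<tau> \<le> Lim (at_left \<tau>) f" using nj \<open>0 < \<tau>\<close> unfolding no_positive_jumps_def by blast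
    ultimately show ?thesis by linarith
  qed
  moreover have "y \<le> f \<tau>"
  proof (rule ccontr)
    assume "\<not> y \<le> f \<tau>"
    moreover have "(f \<longlongrightarrow> f \<tau>) (at_right \<tau>)"
      using cadlag_tendsto_at_right[OF c] t\<tau> t by simp
    ultimately have "eventually (\<lambda>s. f s < y) (at_right \<tau>)"
      by (intro order_tendstoD(2)) auto
    then obtain b where b: "\<tau> < b" "\<And>s. \<tau> < s \<Longrightarrow> s < b \<Longrightarrow> f s < y"
      unfolding eventually_at_right_field by blast
    then obtain s where s: "t \<le> s" "s < b" "y < f s"
      using first_passage_less_iff[OF ex, of b] unfolding \<tau>_def by blast
    have "\<tau> \<le> s" unfolding \<tau>_def using s by (intro first_passage_le) auto
    then show False using b(2)[of s] s \<open>\<not> y \<le> f \<tau>\<close> by (cases "\<tau> = s") auto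
  qed
  ultimately show ?thesis unfolding \<tau>_def by simp
qed

lemma first_passage_upto_le: "first_passage_upto f t y u \<le> u"
  unfolding first_passage_upto_def by (auto intro: first_passage_le order_trans)

lemma first_passage_upto_ge: "t \<le> u \<Longrightarrow> t \<le> first_passage_upto f t y u"
  unfolding first_passage_upto_def by (auto intro: first_passage_ge)

lemma first_passage_upto_less_iff:
  assumes "t \<le> r" "r \<le> u"
  shows "first_passage_upto f t y u < r \<longleftrightarrow> (\<exists>s. t \<le> s \<and> s < r \<and> y < f s)"
proof (cases "\<exists>s. t \<le> s \<and> s \<le> u \<and> y < f s")
  case True
  then have "first_passage_upto f t y u = first_passage f t y" by (simp add: first_passage_upto_def)
  moreover have "\<exists>s\<ge>t. y < f s" using True by blast
  ultimately show ?thesis using first_passage_less_iff[of t y f r] by simp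
next
  case False
  then show ?thesis using assms by (auto simp: first_passage_upto_def)
qed

lemma le_before_first_passage_upto:
  assumes c: "cadlag f" and nj: "no_positive_jumps f" and t: "0 \<le> t" "t \<le> u"
    and below: "\<forall>s\<in>{0..t}. f s \<le> y" and s: "0 \<le> s" "s \<le> first_passage_upto f t y u"
  shows "f s \<le> y"
proof (cases "\<exists>s. t \<le> s \<and> s \<le> u \<and> y < f s")
  case True
  then have ex: "\<exists>s\<ge>t. y < f s" by blast
  from True s(2) have "s \<le> first_passage f t y" by (simp add: first_passage_upto_def)
  then show ?thesis
    using le_before_first_passage[OF below s(1)] first_passage_value[OF c nj t(1) below ex]
    by (cases "s = first_passage f t y") auto
next
  case False
  with s(2) have "s \<le> u" by (simp add: first_passage_upto_def)
  then show ?thesis using False below s(1) by (cases "s \<le> t") auto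
qed

lemma tendsto_at_first_passage_upto:
  assumes c: "cadlag (\<lambda>s. X s \<omega>)" and nj: "no_positive_jumps (\<lambda>s. X s \<omega>)"
    and z: "((\<lambda>s. X s \<omega>) \<longlongrightarrow> 0) at_top" and t: "0 \<le> t" and le: "running_sup X t \<omega> \<le> y"
  shows "((\<lambda>u. X (first_passage_upto (\<lambda>s. X s \<omega>) t y u) \<omega>)
    \<longlongrightarrow> (if y < terminal_sup X \<omega> then y else 0)) at_top"
proof (cases "\<exists>s\<ge>t. y < X s \<omega>")
  case True
  then obtain s where s: "t \<le> s" "y < X s \<omega>" by blast
  have "eventually (\<lambda>u. X (first_passage_upto (\<lambda>s. X s \<omega>) t y u) \<omega> = y) at_top"
    unfolding eventually_at_top_linorder
  proof (intro exI[of _ s] allI impI)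
    fix u assume "s \<le> u"
    then have "first_passage_upto (\<lambda>s. X s \<omega>) t y u = first_passage (\<lambda>s. X s \<omega>) t y"
      using s by (auto simp: first_passage_upto_def)
    then show "X (first_passage_upto (\<lambda>s. X s \<omega>) t y u) \<omega> = y"
      using first_passage_value[OF c nj t running_sup_leD[of X \<omega>, OF c le] True] by simp
  qed
  then show ?thesis
    using less_terminal_sup_iff_after[of X \<omega>, OF c z t le] True by (simp add: tendsto_eventually)
next
  case False
  then have "first_passage_upto (\<lambda>s. X s \<omega>) t y u = u" for u
    by (auto simp: first_passage_upto_def)
  then show ?thesis using less_terminal_sup_iff_after[of X \<omega>, OF c z t le] False z by simp
qed

section \<open>Limits of integrals\<close>

lemma ereal_cSUP:
  fixes f :: "'b \<Rightarrow> real"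
  assumes "A \<noteq> {}" "bdd_above (f ` A)"
  shows "(SUP a\<in>A. ereal (f a)) = ereal (SUP a\<in>A. f a)"
proof -
  obtain a0 where a0: "a0 \<in> A" using assms(1) by blast
  obtain c where c: "\<And>a. a \<in> A \<Longrightarrow> f a \<le> c" using assms(2) unfolding bdd_above_def by auto
  have "ereal (f a0) \<le> (SUP a\<in>A. ereal (f a))" using a0 by (rule SUP_upper2) simp
  moreover have "(SUP a\<in>A. ereal (f a)) \<le> ereal c" using c by (intro SUP_least) simp
  ultimately have "\<bar>SUP a\<in>A. ereal (f a)\<bar> \<noteq> \<infinity>" by auto
  then show ?thesis by (rule ereal_SUP[symmetric])
qed

lemma borel_measurable_AE_eq_complete:
  fixes f g :: "'a \<Rightarrow> real"
  assumes ae: "AE \<omega> in M. f \<omega> = g \<omega>" and g: "g \<in> borel_measurable G"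
    and sp: "space G = space M"
    and complete: "\<And>A B. A \<in> null_sets M \<Longrightarrow> B \<subseteq> A \<Longrightarrow> B \<in> sets G"
  shows "f \<in> borel_measurable G"
proof -
  from ae obtain A where A: "{\<omega>\<in>space M. \<not> f \<omega> = g \<omega>} \<subseteq> A" "emeasure M A = 0" "A \<in> sets M"
    by (rule AE_E)
  then have null: "A \<in> null_sets M" by (simp add: null_sets_def)
  show ?thesis
  proof (rule measurableI)
    fix C :: "real set" assume C: "C \<in> sets borel"
    have "f -` C \<inter> space G = ((g -` C \<inter> space G) - A) \<union> ((f -` C \<inter> space G) \<inter> A)"
      using A(1) sp by auto
    moreover have "g -` C \<inter> space G \<in> sets G" using g C by (rule measurable_sets)
    moreover have "A \<in> sets G" "(f -` C \<inter> space G) \<inter> A \<in> sets G"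
      using complete[OF null] by auto
    ultimately show "f -` C \<inter> space G \<in> sets G" by (metis sets.Un sets.Diff)
  qed simp
qed

lemma (in prob_space) integrable_limit_Fatou:
  fixes X :: "nat \<Rightarrow> 'a \<Rightarrow> real"
  assumes Xm: "\<And>k. X k \<in> borel_measurable M" and Xn: "\<And>k \<omega>. \<omega> \<in> space M \<Longrightarrow> 0 \<le> X k \<omega>"
    and Xi: "\<And>k. integrable M (X k)" and c: "\<And>k. integral\<^sup>L M (X k) = c"
    and Lm: "L \<in> borel_measurable M" and lim: "AE \<omega> in M. (\<lambda>k. X k \<omega>) \<longlonglongrightarrow> L \<omega>"
  shows "integrable M L" "integral\<^sup>L M L \<le> c"
proof -
  have Ln: "AE \<omega> in M. 0 \<le> L \<omega>"
    using lim AE_space by eventually_elim (use Xn in \<open>auto intro!: LIMSEQ_le_const\<close>)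
  have c0: "0 \<le> c" using c[of 0] Xn by (metis integral_nonneg_AE AE_I2)
  have "(\<integral>\<^sup>+\<omega>. ennreal (L \<omega>) \<partial>M) = (\<integral>\<^sup>+\<omega>. liminf (\<lambda>k. ennreal (X k \<omega>)) \<partial>M)"
  proof (rule nn_integral_cong_AE)
    show "AE \<omega> in M. ennreal (L \<omega>) = liminf (\<lambda>k. ennreal (X k \<omega>))"
      using lim by eventually_elim (rule lim_imp_Liminf[symmetric], simp, rule tendsto_ennrealI)
  qed
  also have "\<dots> \<le> liminf (\<lambda>k. \<integral>\<^sup>+\<omega>. ennreal (X k \<omega>) \<partial>M)"
    by (rule nn_integral_liminf) (use Xm in simp)
  also have "(\<lambda>k. \<integral>\<^sup>+\<omega>. ennreal (X k \<omega>) \<partial>M) = (\<lambda>k. ennreal c)"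
    using nn_integral_eq_integral[OF Xi] Xn c by (simp add: AE_I2)
  finally have fat: "(\<integral>\<^sup>+\<omega>. ennreal (L \<omega>) \<partial>M) \<le> ennreal c"
    by (simp add: Liminf_const)
  then show "integrable M L"
    by (intro integrableI_nonneg[OF Lm Ln]) (auto simp: top_unique intro: le_less_trans)
  have "integral\<^sup>L M L = enn2real (\<integral>\<^sup>+\<omega>. ennreal (L \<omega>) \<partial>M)"
    by (rule integral_eq_nn_integral[OF Lm Ln])
  also have "\<dots> \<le> c" using fat c0 by (simp add: enn2real_leI)
  finally show "integral\<^sup>L M L \<le> c" .
qed

lemma integral_upper_tail_tendsto_0:
  fixes Y :: "'a \<Rightarrow> real"
  assumes Yi: "integrable M Y" and Yn: "\<And>\<omega>. \<omega> \<in> space M \<Longrightarrow> 0 \<le> Y \<omega>"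
  shows "(\<lambda>m::nat. \<integral>\<omega>. Y \<omega> * indicator {\<omega>\<in>space M. real m < Y \<omega>} \<omega> \<partial>M) \<longlonglongrightarrow> 0"
proof -
  have [measurable]: "Y \<in> borel_measurable M" using Yi by (rule borel_measurable_integrable)
  have "(\<lambda>m::nat. \<integral>\<omega>. Y \<omega> * indicator {\<omega>\<in>space M. real m < Y \<omega>} \<omega> \<partial>M) \<longlonglongrightarrow> (\<integral>\<omega>. 0 \<partial>M)"
  proof (rule integral_dominated_convergence[where w=Y])
    show "AE \<omega> in M. (\<lambda>m. Y \<omega> * indicator {\<omega>\<in>space M. real m < Y \<omega>} \<omega>) \<longlonglongrightarrow> 0"
    proof (rule AE_I2)
      fix \<omega> assume "\<omega> \<in> space M"
      obtain m0 :: nat where "Y \<omega> \<le> real m0" using real_arch_simple by blast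
      then have "eventually (\<lambda>m. Y \<omega> * indicator {\<omega>\<in>space M. real m < Y \<omega>} \<omega> = 0) sequentially"
        unfolding eventually_sequentially by (intro exI[of _ m0]) auto
      then show "(\<lambda>m. Y \<omega> * indicator {\<omega>\<in>space M. real m < Y \<omega>} \<omega>) \<longlonglongrightarrow> 0"
        by (rule tendsto_eventually)
    qed
    show "AE \<omega> in M. norm (Y \<omega> * indicator {\<omega>\<in>space M. real m < Y \<omega>} \<omega>) \<le> Y \<omega>" for m
      using Yn by (auto simp: indicator_def)
    show "(\<lambda>\<omega>. Y \<omega> * indicator {\<omega>\<in>space M. real m < Y \<omega>} \<omega>) \<in> borel_measurable M" for m
      by measurable
  qed (use Yi in auto)
  then show ?thesis by simp
qed

lemma (in prob_space) integral_le_truncation_add_tail: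
  fixes X Y :: "'a \<Rightarrow> real"
  assumes Xi: "integrable M X" and Xn: "\<And>\<omega>. \<omega> \<in> space M \<Longrightarrow> 0 \<le> X \<omega>"
    and Yi: "integrable M Y" and Yn: "\<And>\<omega>. \<omega> \<in> space M \<Longrightarrow> 0 \<le> Y \<omega>"
    and K: "0 < K" and m: "0 \<le> m"
    and tail: "(\<integral>\<omega>. X \<omega> * indicator {\<omega>\<in>space M. K < X \<omega>} \<omega> \<partial>M)
      \<le> (\<integral>\<omega>. Y \<omega> * indicator {\<omega>\<in>space M. K < X \<omega>} \<omega> \<partial>M)"
  shows "integral\<^sup>L M X \<le> (\<integral>\<omega>. min (X \<omega>) K \<partial>M)
    + (\<integral>\<omega>. Y \<omega> * indicator {\<omega>\<in>space M. m < Y \<omega>} \<omega> \<partial>M) + m * integral\<^sup>L M X / K"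
proof -
  define C where "C = {\<omega>\<in>space M. K < X \<omega>}"
  define G where "G \<omega> = Y \<omega> * indicator {\<omega>\<in>space M. m < Y \<omega>} \<omega>" for \<omega>
  have [measurable]: "X \<in> borel_measurable M" "Y \<in> borel_measurable M"
    using Xi Yi by (auto intro: borel_measurable_integrable)
  have Cs: "C \<in> sets M" unfolding C_def by measurable
  have iC: "integrable M (\<lambda>\<omega>. indicator C \<omega> :: real)"
    using Cs by (intro integrable_real_indicator) (auto simp: less_top[symmetric])
  have iG: "integrable M G"
    unfolding G_def using integrable_mult_indicator[OF _ Yi] by (simp add: mult.commute)
  have i1: "integrable M (\<lambda>\<omega>. min (X \<omega>) K)"
    by (rule Bochner_Integration.integrable_bound[OF Xi]) (use Xn K in auto)
  have i2: "integrable M (\<lambda>\<omega>. X \<omega> * indicator C \<omega>)"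
    using integrable_mult_indicator[OF Cs Xi] by (simp add: mult.commute)
  have markov: "K * prob C \<le> integral\<^sup>L M X"
  proof -
    have "K * prob C = (\<integral>\<omega>. K * indicator C \<omega> \<partial>M)" using Cs by simp
    also have "\<dots> \<le> integral\<^sup>L M X"
      using iC Xi Xn by (intro integral_mono) (auto simp: C_def indicator_def)
    finally show ?thesis .
  qed
  have "integral\<^sup>L M X \<le> (\<integral>\<omega>. min (X \<omega>) K + X \<omega> * indicator C \<omega> \<partial>M)"
    by (rule integral_mono) (use Xi i1 i2 K in \<open>auto simp: C_def indicator_def\<close>)
  also have "\<dots> = (\<integral>\<omega>. min (X \<omega>) K \<partial>M) + (\<integral>\<omega>. X \<omega> * indicator C \<omega> \<partial>M)"
    using i1 i2 by simp
  also have "(\<integral>\<omega>. X \<omega> * indicator C \<omega> \<partial>M) \<le> (\<integral>\<omega>. Y \<omega> * indicator C \<omega> \<partial>M)"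
    using tail unfolding C_def .
  also have "\<dots> \<le> (\<integral>\<omega>. G \<omega> + m * indicator C \<omega> \<partial>M)"
  proof (rule integral_mono)
    show "integrable M (\<lambda>\<omega>. Y \<omega> * indicator C \<omega>)"
      using integrable_mult_indicator[OF Cs Yi] by (simp add: mult.commute)
    show "integrable M (\<lambda>\<omega>. G \<omega> + m * indicator C \<omega>)"
      using iG iC by (intro Bochner_Integration.integrable_add integrable_mult_right)
    show "Y \<omega> * indicator C \<omega> \<le> G \<omega> + m * indicator C \<omega>" if "\<omega> \<in> space M" for \<omega>
      using Yn[OF that] that m by (auto simp: G_def indicator_def)
  qed
  also have "\<dots> = integral\<^sup>L M G + m * prob C"
    using iG iC Cs by simp
  also have "m * prob C \<le> m * integral\<^sup>L M X / K"
    using mult_left_mono[OF markov m] K by (simp add: field_simps)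
  finally show ?thesis by (simp add: G_def)
qed

text \<open>The tail hypothesis replaces uniform integrability.\<close>

lemma (in prob_space) tail_dominated_truncation:
  fixes X :: "nat \<Rightarrow> 'a \<Rightarrow> real"
  assumes Xn: "\<And>k \<omega>. \<omega> \<in> space M \<Longrightarrow> 0 \<le> X k \<omega>"
    and Xi: "\<And>k. integrable M (X k)" and c: "\<And>k. integral\<^sup>L M (X k) = c"
    and Yi: "integrable M Y" and Yn: "\<And>\<omega>. \<omega> \<in> space M \<Longrightarrow> 0 \<le> Y \<omega>"
    and tail: "\<And>k K. K > 0 \<Longrightarrow>
        (\<integral>\<omega>. X k \<omega> * indicator {\<omega>\<in>space M. K < X k \<omega>} \<omega> \<partial>M)
          \<le> (\<integral>\<omega>. Y \<omega> * indicator {\<omega>\<in>space M. K < X k \<omega>} \<omega> \<partial>M)"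
    and e: "e > 0"
  shows "\<exists>K>0. \<forall>k. c \<le> (\<integral>\<omega>. min (X k \<omega>) K \<partial>M) + e"
proof -
  have "0 < e/2" using e by simp
  with integral_upper_tail_tendsto_0[OF Yi Yn]
  have "eventually (\<lambda>m. (\<integral>\<omega>. Y \<omega> * indicator {\<omega>\<in>space M. real m < Y \<omega>} \<omega> \<partial>M) < e/2) sequentially"
    by (rule order_tendstoD)
  then obtain m :: nat where m: "(\<integral>\<omega>. Y \<omega> * indicator {\<omega>\<in>space M. real m < Y \<omega>} \<omega> \<partial>M) < e/2"
    by (auto simp: eventually_sequentially)
  have c0: "0 \<le> c" using c[of 0] Xn by (metis integral_nonneg_AE AE_I2)
  define K where "K = 2 * real m * c / e + 1"
  have K0: "K > 0" unfolding K_def using c0 e by (intro add_nonneg_pos) auto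
  have mK: "real m * c / K < e/2"
    using K0 e by (simp add: K_def field_simps)
  have "c \<le> (\<integral>\<omega>. min (X k \<omega>) K \<partial>M) + e" for k
  proof -
    have "integral\<^sup>L M (X k) \<le> (\<integral>\<omega>. min (X k \<omega>) K \<partial>M)
        + (\<integral>\<omega>. Y \<omega> * indicator {\<omega>\<in>space M. real m < Y \<omega>} \<omega> \<partial>M) + real m * integral\<^sup>L M (X k) / K"
      by (rule integral_le_truncation_add_tail[OF Xi[of k] _ Yi _ K0 _ tail[OF K0]]) (use Xn Yn in auto)
    then show ?thesis unfolding c using m mK by linarith
  qed
  with K0 show ?thesis by blast
qed

lemma (in prob_space) integral_limit_tail_dominated:
  fixes X :: "nat \<Rightarrow> 'a \<Rightarrow> real"
  assumes Xm: "\<And>k. X k \<in> borel_measurable M" and Xn: "\<And>k \<omega>. \<omega> \<in> space M \<Longrightarrow> 0 \<le> X k \<omega>"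
    and Xi: "\<And>k. integrable M (X k)" and c: "\<And>k. integral\<^sup>L M (X k) = c"
    and Lm: "L \<in> borel_measurable M" and lim: "AE \<omega> in M. (\<lambda>k. X k \<omega>) \<longlonglongrightarrow> L \<omega>"
    and Yi: "integrable M Y" and Yn: "\<And>\<omega>. \<omega> \<in> space M \<Longrightarrow> 0 \<le> Y \<omega>"
    and tail: "\<And>k K. K > 0 \<Longrightarrow>
        (\<integral>\<omega>. X k \<omega> * indicator {\<omega>\<in>space M. K < X k \<omega>} \<omega> \<partial>M)
          \<le> (\<integral>\<omega>. Y \<omega> * indicator {\<omega>\<in>space M. K < X k \<omega>} \<omega> \<partial>M)"
  shows "integrable M L" "integral\<^sup>L M L = c"
proof -
  note Fatou = integrable_limit_Fatou[OF Xm Xn Xi c Lm lim]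
  show "integrable M L" by (rule Fatou(1))
  have "c \<le> integral\<^sup>L M L + e" if e: "e > 0" for e
  proof -
    obtain K where K: "K > 0" "\<And>k. c \<le> (\<integral>\<omega>. min (X k \<omega>) K \<partial>M) + e/2"
      using tail_dominated_truncation[where X=X and Y=Y and c=c and e="e/2", OF Xn Xi c Yi Yn tail] e by auto
    have "(\<lambda>k. \<integral>\<omega>. min (X k \<omega>) K \<partial>M) \<longlonglongrightarrow> (\<integral>\<omega>. min (L \<omega>) K \<partial>M)"
    proof (rule integral_dominated_convergence[where w="\<lambda>_. K"])
      show "AE \<omega> in M. (\<lambda>k. min (X k \<omega>) K) \<longlonglongrightarrow> min (L \<omega>) K"
        using lim by eventually_elim (auto intro: tendsto_min)
      show "AE \<omega> in M. norm (min (X k \<omega>) K) \<le> K" for k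
        using Xn K by (auto intro!: AE_I2)
    qed (use Xm Lm in auto)
    then have "eventually (\<lambda>k. (\<integral>\<omega>. min (X k \<omega>) K \<partial>M) < (\<integral>\<omega>. min (L \<omega>) K \<partial>M) + e/2) sequentially"
      by (rule order_tendstoD) (use e in simp)
    then obtain k where "(\<integral>\<omega>. min (X k \<omega>) K \<partial>M) < (\<integral>\<omega>. min (L \<omega>) K \<partial>M) + e/2"
      by (auto simp: eventually_sequentially)
    moreover have "(\<integral>\<omega>. min (L \<omega>) K \<partial>M) \<le> integral\<^sup>L M L"
      by (rule integral_mono_AE) (use Fatou(1) Lm in \<open>auto intro: Bochner_Integration.integrable_bound[OF Fatou(1)]\<close>)
    ultimately show ?thesis using K(2)[of k] by linarith
  qed
  then show "integral\<^sup>L M L = c"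
    using Fatou(2) by (meson antisym field_le_epsilon)
qed

lemma nn_integral_inverse_interval:
  assumes a: "0 < a" "a \<le> b"
  shows "(\<integral>\<^sup>+x. (if a \<le> x \<and> x < b then ennreal (1 / x) else 0) \<partial>lborel) = ennreal (ln b - ln a)"
proof -
  have "((\<lambda>x. 1 / x) has_integral (ln b - ln a)) {a..b}"
  proof (rule fundamental_theorem_of_calculus[OF a(2)])
    fix x assume "x \<in> {a..b}"
    then have "(ln has_real_derivative 1 / x) (at x within {a..b})"
      using a by (auto intro!: derivative_eq_intros)
    then show "(ln has_vector_derivative 1 / x) (at x within {a..b})"
      by (simp add: has_real_derivative_iff_has_vector_derivative)
  qed
  then have "((\<lambda>x. if x \<in> {a..b} then 1 / x else 0) has_integral (ln b - ln a)) UNIV"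
    by (simp only: has_integral_restrict_UNIV)
  moreover have "(\<lambda>x. if x \<in> {a..b} then 1 / x else 0) = (\<lambda>x. indicator {a..b} x * (1 / x :: real))"
    by (auto simp: indicator_def)
  ultimately have "((\<lambda>x. indicator {a..b} x * (1 / x :: real)) has_integral (ln b - ln a)) UNIV"
    by simp
  then have "(\<integral>\<^sup>+x. ennreal (indicator {a..b} x * (1 / x)) \<partial>lborel) = ennreal (ln b - ln a)"
    by (rule nn_integral_has_integral_lborel[rotated 2]) (use a in \<open>auto simp: indicator_def\<close>)
  moreover have "(\<integral>\<^sup>+x. (if a \<le> x \<and> x < b then ennreal (1 / x) else 0) \<partial>lborel)
      = (\<integral>\<^sup>+x. ennreal (indicator {a..b} x * (1 / x)) \<partial>lborel)"
    by (rule nn_integral_cong_AE)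
      (use AE_lborel_singleton[of b] in \<open>eventually_elim, auto simp: indicator_def\<close>)
  ultimately show ?thesis by simp
qed

lemma nn_integral_inverse_square:
  assumes a: "0 < a" and c: "0 \<le> c"
  shows "(\<integral>\<^sup>+x. (if a \<le> x then ennreal (c / x\<^sup>2) else 0) \<partial>lborel) = ennreal (c / a)"
proof -
  have "(\<integral>\<^sup>+x. ennreal (1 / x\<^sup>2) * indicator {a..} x \<partial>lborel) = ennreal (0 - (- 1 / a))"
  proof (rule nn_integral_FTC_atLeast[where F="\<lambda>x. - 1 / x"])
    fix x :: real assume "a \<le> x"
    then show "((\<lambda>x. - 1 / x) has_real_derivative 1 / x\<^sup>2) (at x)"
      using a by (auto intro!: derivative_eq_intros simp: power2_eq_square)
  next
    show "((\<lambda>x::real. - 1 / x) \<longlongrightarrow> 0) at_top"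
      using tendsto_minus[OF tendsto_divide_0[OF tendsto_const
          filterlim_ident[THEN filterlim_at_top_imp_at_infinity]], of 1]
      by simp
  qed simp_all
  then have "(\<integral>\<^sup>+x. ennreal c * (ennreal (1 / x\<^sup>2) * indicator {a..} x) \<partial>lborel) = ennreal c * ennreal (1 / a)"
    by (subst nn_integral_cmult) auto
  moreover have "ennreal c * (ennreal (1 / x\<^sup>2) * indicator {a..} x) = (if a \<le> x then ennreal (c / x\<^sup>2) else 0)"
    for x using c by (simp add: indicator_def ennreal_mult[symmetric])
  ultimately show ?thesis using a c by (simp add: ennreal_mult[symmetric])
qed

section \<open>Optional stopping\<close>

lemma martingale_integrable: "martingale M F X \<Longrightarrow> 0 \<le> t \<Longrightarrow> integrable M (X t)"
  unfolding martingale_def by blast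

lemma martingale_measurable: "martingale M F X \<Longrightarrow> 0 \<le> t \<Longrightarrow> X t \<in> borel_measurable (F t)"
  unfolding martingale_def adapted_def by blast

definition dyadic_point :: "real \<Rightarrow> real \<Rightarrow> nat \<Rightarrow> nat \<Rightarrow> real" where
  "dyadic_point t u k j = t + real j * (u - t) / 2 ^ k"

text \<open>Approximating from strictly above keeps \<open>dyadic_approx t u k \<circ> \<rho>\<close> a stopping time
  whenever \<open>{\<rho> < r} \<in> F r\<close>.\<close>

definition dyadic_index :: "real \<Rightarrow> real \<Rightarrow> nat \<Rightarrow> real \<Rightarrow> nat" where
  "dyadic_index t u k r = (LEAST j. j = 2 ^ k \<or> r < dyadic_point t u k j)"

definition dyadic_approx :: "real \<Rightarrow> real \<Rightarrow> nat \<Rightarrow> real \<Rightarrow> real" where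
  "dyadic_approx t u k r = dyadic_point t u k (dyadic_index t u k r)"

lemma dyadic_point_mono: "t \<le> u \<Longrightarrow> i \<le> j \<Longrightarrow> dyadic_point t u k i \<le> dyadic_point t u k j"
  unfolding dyadic_point_def by (intro add_left_mono divide_right_mono mult_right_mono) auto

lemma dyadic_point_bounds:
  assumes "t \<le> u" "j \<le> 2 ^ k"
  shows "t \<le> dyadic_point t u k j" "dyadic_point t u k j \<le> u"
  using dyadic_point_mono[OF assms(1), of 0 j k] dyadic_point_mono[OF assms(1), of j "2 ^ k" k] assms(2)
  by (simp_all add: dyadic_point_def)

lemma dyadic_index_le: "dyadic_index t u k r \<le> 2 ^ k"
  unfolding dyadic_index_def by (rule Least_le) simp

lemma dyadic_index_eq_iff:
  assumes "j \<le> 2 ^ k"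
  shows "dyadic_index t u k r = j \<longleftrightarrow>
    (j = 2 ^ k \<or> r < dyadic_point t u k j) \<and> (\<forall>i<j. \<not> r < dyadic_point t u k i)"
proof -
  let ?P = "\<lambda>j. j = 2 ^ k \<or> r < dyadic_point t u k j"
  have "dyadic_index t u k r = j \<longleftrightarrow> ?P j \<and> (\<forall>i<j. \<not> ?P i)"
  proof
    have "?P (dyadic_index t u k r)"
      unfolding dyadic_index_def by (rule LeastI[of _ "2 ^ k"]) simp
    moreover have "\<not> ?P i" if "i < dyadic_index t u k r" for i
      using that unfolding dyadic_index_def by (rule not_less_Least)
    ultimately show "?P j \<and> (\<forall>i<j. \<not> ?P i)" if "dyadic_index t u k r = j"
      using that by auto
  next
    assume "?P j \<and> (\<forall>i<j. \<not> ?P i)"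
    then show "dyadic_index t u k r = j"
      unfolding dyadic_index_def by (intro Least_equality) (auto simp: not_less[symmetric])
  qed
  also have "\<dots> \<longleftrightarrow> ?P j \<and> (\<forall>i<j. \<not> r < dyadic_point t u k i)"
    using assms by auto
  finally show ?thesis .
qed

lemma dyadic_approx_bounds:
  assumes "t \<le> r" "r \<le> u"
  shows "r \<le> dyadic_approx t u k r" "dyadic_approx t u k r \<le> r + (u - t) / 2 ^ k"
proof -
  define j where "j = dyadic_index t u k r"
  have j: "j = 2 ^ k \<or> r < dyadic_point t u k j"
    unfolding j_def dyadic_index_def by (rule LeastI[of _ "2 ^ k"]) simp
  have approx: "dyadic_approx t u k r = dyadic_point t u k j"
    by (simp add: dyadic_approx_def j_def)
  have "dyadic_point t u k (2 ^ k) = u" by (simp add: dyadic_point_def)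
  then show "r \<le> dyadic_approx t u k r"
    unfolding approx using j assms(2) by auto
  have "j \<noteq> 0"
  proof
    assume "j = 0"
    with j assms(1) show False by (simp add: dyadic_point_def)
  qed
  then obtain i where i: "j = Suc i" using not0_implies_Suc by blast
  then have "\<not> r < dyadic_point t u k i"
    using not_less_Least[of i "\<lambda>j. j = 2 ^ k \<or> r < dyadic_point t u k j"]
    unfolding j_def dyadic_index_def by auto
  moreover have "dyadic_point t u k (Suc i) = dyadic_point t u k i + (u - t) / 2 ^ k"
    unfolding dyadic_point_def by (simp add: field_simps)
  ultimately show "dyadic_approx t u k r \<le> r + (u - t) / 2 ^ k"
    unfolding approx i by simp
qed

lemma dyadic_approx_tendsto:
  assumes "t \<le> r" "r \<le> u"
  shows "(\<lambda>k. dyadic_approx t u k r) \<longlonglongrightarrow> r"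
proof (rule tendsto_sandwich[of "\<lambda>k. r" _ _ "\<lambda>k. r + (u - t) / 2 ^ k"])
  have "(\<lambda>k. (u - t) / 2 ^ k) \<longlonglongrightarrow> 0" by (rule LIMSEQ_divide_realpow_zero) simp
  then show "(\<lambda>k. r + (u - t) / 2 ^ k) \<longlonglongrightarrow> r"
    using tendsto_add[OF tendsto_const[of r]] by fastforce
qed (use dyadic_approx_bounds[OF assms] in auto)

lemma AE_tendsto_at_dyadic_approx:
  assumes rc: "AE \<omega> in M. \<forall>s\<ge>0. continuous (at_right s) (\<lambda>s. X s \<omega>)"
    and t: "0 \<le> t" and \<rho>: "\<And>\<omega>. \<omega> \<in> space M \<Longrightarrow> t \<le> \<rho> \<omega> \<and> \<rho> \<omega> \<le> u"
  shows "AE \<omega> in M. (\<lambda>k. X (dyadic_approx t u k (\<rho> \<omega>)) \<omega>) \<longlonglongrightarrow> X (\<rho> \<omega>) \<omega>"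
  using rc AE_space
proof eventually_elim
  case (elim \<omega>)
  have \<rho>\<omega>: "t \<le> \<rho> \<omega>" "\<rho> \<omega> \<le> u" using \<rho>[OF elim(2)] by auto
  have "continuous (at (\<rho> \<omega>) within {\<rho> \<omega>..}) (\<lambda>s. X s \<omega>)"
    unfolding at_within_Ici_at_right using elim(1) \<rho>\<omega>(1) t by simp
  moreover have "dyadic_approx t u k (\<rho> \<omega>) \<in> {\<rho> \<omega>..}" for k
    using dyadic_approx_bounds(1)[OF \<rho>\<omega>] by simp
  ultimately show ?case
    by (rule continuous_within_tendsto_compose'[OF _ _ dyadic_approx_tendsto[OF \<rho>\<omega>]])
qed

lemma usual_filtrationD:
  assumes "usual_filtration M F"
  shows "prob_space M" "\<forall>A\<in>null_sets M. \<forall>B. B \<subseteq> A \<longrightarrow> B \<in> sets M"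
    "\<forall>t\<ge>0. subalgebra M (F t)" "\<forall>s t. 0 \<le> s \<longrightarrow> s \<le> t \<longrightarrow> sets (F s) \<subseteq> sets (F t)"
    "null_sets M \<subseteq> sets (F 0)"
proof -
  note usual = assms[unfolded usual_filtration_def]
  show "prob_space M" using usual by (elim conjE)
  show "\<forall>A\<in>null_sets M. \<forall>B. B \<subseteq> A \<longrightarrow> B \<in> sets M" using usual by (elim conjE)
  show "\<forall>t\<ge>0. subalgebra M (F t)" using usual by (elim conjE)
  show "\<forall>s t. 0 \<le> s \<longrightarrow> s \<le> t \<longrightarrow> sets (F s) \<subseteq> sets (F t)" using usual by (elim conjE)
  show "null_sets M \<subseteq> sets (F 0)" using usual by (elim conjE)
qed

locale usual_filtered_space =
  fixes M :: "'a measure" and F :: "real \<Rightarrow> 'a measure"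
  assumes usual_filtration: "usual_filtration M F"
begin

sublocale prob_space M
  by (rule usual_filtrationD(1)[OF usual_filtration])

lemma subalgebra_F: "0 \<le> t \<Longrightarrow> subalgebra M (F t)"
  using usual_filtrationD(3)[OF usual_filtration] by blast

lemma space_F: "0 \<le> t \<Longrightarrow> space (F t) = space M"
  using subalgebra_F unfolding subalgebra_def by simp

lemma sets_F_subset: "0 \<le> t \<Longrightarrow> A \<in> sets (F t) \<Longrightarrow> A \<in> sets M"
  using subalgebra_F unfolding subalgebra_def by auto

lemma sets_F_mono: "0 \<le> s \<Longrightarrow> s \<le> t \<Longrightarrow> A \<in> sets (F s) \<Longrightarrow> A \<in> sets (F t)"
  using usual_filtrationD(4)[OF usual_filtration] by blast

lemma null_subset_sets: "A \<in> null_sets M \<Longrightarrow> B \<subseteq> A \<Longrightarrow> B \<in> sets M"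
  using usual_filtrationD(2)[OF usual_filtration] by blast

lemma null_subset_sets_F:
  assumes "0 \<le> t" "A \<in> null_sets M" "B \<subseteq> A"
  shows "B \<in> sets (F t)"
proof -
  have "B \<in> null_sets M"
    using null_subset_sets[OF assms(2,3)] assms(2,3) null_sets_subset by blast
  then have "B \<in> sets (F 0)"
    using usual_filtrationD(5)[OF usual_filtration] by blast
  then show ?thesis using sets_F_mono[of 0 t] assms(1) by simp
qed

lemma measurable_F_imp_measurable:
  fixes f :: "'a \<Rightarrow> real"
  shows "0 \<le> t \<Longrightarrow> f \<in> borel_measurable (F t) \<Longrightarrow> f \<in> borel_measurable M"
  by (rule measurable_from_subalg[OF subalgebra_F])

lemma measurable_F_mono:
  fixes f :: "'a \<Rightarrow> real"
  assumes "0 \<le> s" "s \<le> t" "f \<in> borel_measurable (F s)"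
  shows "f \<in> borel_measurable (F t)"
proof (rule measurableI)
  have sp: "space (F s) = space (F t)" using assms(1,2) by (simp add: space_F)
  fix A :: "real set" assume "A \<in> sets borel"
  then have "f -` A \<inter> space (F s) \<in> sets (F s)" by (rule measurable_sets[OF assms(3)])
  then show "f -` A \<inter> space (F t) \<in> sets (F t)" unfolding sp by (rule sets_F_mono[OF assms(1,2)])
qed simp

lemma sigma_finite_subalgebra_F: "0 \<le> t \<Longrightarrow> sigma_finite_subalgebra M (F t)"
  by (rule finite_measure_subalgebra_is_sigma_finite)
     (simp add: finite_measure_subalgebra_def finite_measure_subalgebra_axioms_def subalgebra_F
       finite_measure_axioms)

lemma borel_measurable_F_AE_eq:
  fixes f g :: "'a \<Rightarrow> real"
  shows "0 \<le> t \<Longrightarrow> AE \<omega> in M. f \<omega> = g \<omega> \<Longrightarrow> g \<in> borel_measurable (F t) \<Longrightarrow> f \<in> borel_measurable (F t)"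
  by (rule borel_measurable_AE_eq_complete) (auto simp: space_F intro: null_subset_sets_F)

lemma borel_measurable_AE_eq:
  fixes f g :: "'a \<Rightarrow> real"
  shows "AE \<omega> in M. f \<omega> = g \<omega> \<Longrightarrow> g \<in> borel_measurable M \<Longrightarrow> f \<in> borel_measurable M"
  by (rule borel_measurable_AE_eq_complete) (auto intro: null_subset_sets)

lemma borel_measurable_AE_limit:
  fixes X :: "nat \<Rightarrow> 'a \<Rightarrow> real"
  assumes "\<And>k. X k \<in> borel_measurable M" "AE \<omega> in M. (\<lambda>k. X k \<omega>) \<longlonglongrightarrow> L \<omega>"
  shows "L \<in> borel_measurable M"
proof (rule borel_measurable_AE_eq)
  show "(\<lambda>\<omega>. lim (\<lambda>k. X k \<omega>)) \<in> borel_measurable M" using assms(1) by measurable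
  show "AE \<omega> in M. L \<omega> = lim (\<lambda>k. X k \<omega>)"
    using assms(2) by eventually_elim (simp add: limI)
qed

lemma sets_F_AE_eq:
  assumes t: "0 \<le> t" and A: "A \<in> sets (F t)" and C: "C \<subseteq> space M"
    and ae: "AE \<omega> in M. \<omega> \<in> C \<longleftrightarrow> \<omega> \<in> A"
  shows "C \<in> sets (F t)"
proof -
  have "(indicator A :: 'a \<Rightarrow> real) \<in> borel_measurable (F t)" using A by simp
  moreover have "AE \<omega> in M. indicator C \<omega> = (indicator A \<omega> :: real)"
    using ae by eventually_elim (simp add: indicator_def)
  ultimately have "(indicator C :: 'a \<Rightarrow> real) \<in> borel_measurable (F t)"
    using borel_measurable_F_AE_eq[OF t] by blast
  then have "C \<inter> space (F t) \<in> sets (F t)" unfolding borel_measurable_indicator_iff .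
  then show ?thesis using C space_F[OF t] by (simp add: Int_absorb2)
qed

lemma martingale_set_integral_eq:
  assumes mart: "martingale M F X" and st: "0 \<le> s" "s \<le> t" and A: "A \<in> sets (F s)"
  shows "(\<integral>\<omega>. indicator A \<omega> * X t \<omega> \<partial>M) = (\<integral>\<omega>. indicator A \<omega> * X s \<omega> \<partial>M)"
proof -
  interpret S: sigma_finite_subalgebra M "F s" by (rule sigma_finite_subalgebra_F[OF st(1)])
  have Xt: "integrable M (X t)" using mart st by (simp add: martingale_integrable)
  have Xs: "X s \<in> borel_measurable M"
    using measurable_F_imp_measurable[OF st(1) martingale_measurable[OF mart st(1)]] .
  have ae: "AE \<omega> in M. real_cond_exp M (F s) (X t) \<omega> = X s \<omega>"
    using mart st unfolding martingale_def by blast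
  have "(\<integral>\<omega>\<in>A. X t \<omega> \<partial>M) = (\<integral>\<omega>\<in>A. real_cond_exp M (F s) (X t) \<omega> \<partial>M)"
    by (rule S.real_cond_exp_intA[OF Xt A])
  also have "\<dots> = (\<integral>\<omega>\<in>A. X s \<omega> \<partial>M)"
    unfolding set_lebesgue_integral_def using ae Xs sets_F_subset[OF st(1) A]
    by (intro integral_cong_AE) (auto simp: borel_measurable_cond_exp2)
  finally show ?thesis by (simp add: set_lebesgue_integral_def)
qed

lemma martingale_at_simple_time:
  assumes mart: "martingale M F X" and J: "finite J"
    and r: "\<And>j. j \<in> J \<Longrightarrow> 0 \<le> r j \<and> r j \<le> u"
    and idx: "\<And>\<omega>. \<omega> \<in> space M \<Longrightarrow> idx \<omega> \<in> J"
    and C: "\<And>j. j \<in> J \<Longrightarrow> C \<inter> {\<omega>\<in>space M. idx \<omega> = j} \<in> sets (F (r j))"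
  shows "integrable M (\<lambda>\<omega>. indicator C \<omega> * X (r (idx \<omega>)) \<omega>)"
    and "(\<integral>\<omega>. indicator C \<omega> * X (r (idx \<omega>)) \<omega> \<partial>M) = (\<integral>\<omega>. indicator C \<omega> * X u \<omega> \<partial>M)"
proof -
  define E where "E j = C \<inter> {\<omega>\<in>space M. idx \<omega> = j}" for j
  obtain \<omega>0 where "\<omega>0 \<in> space M" using not_empty by blast
  then have u: "0 \<le> u" using r[OF idx] by (meson order_trans)
  have E: "E j \<in> sets M" if "j \<in> J" for j using sets_F_subset C[OF that] r[OF that] by (auto simp: E_def)
  have split: "indicator C \<omega> * Y (idx \<omega>) = (\<Sum>j\<in>J. indicator (E j) \<omega> * Y j)"
    if "\<omega> \<in> space M" for \<omega> and Y :: "'b \<Rightarrow> real"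
  proof -
    have "(\<Sum>j\<in>J. indicator (E j) \<omega> * Y j) = (\<Sum>j\<in>J. if j = idx \<omega> then indicator C \<omega> * Y j else 0)"
      using that by (intro sum.cong) (auto simp: E_def indicator_def)
    then show ?thesis using idx[OF that] J by simp
  qed
  have split_r: "indicator C \<omega> * X (r (idx \<omega>)) \<omega> = (\<Sum>j\<in>J. indicator (E j) \<omega> * X (r j) \<omega>)"
    and split_u: "indicator C \<omega> * X u \<omega> = (\<Sum>j\<in>J. indicator (E j) \<omega> * X u \<omega>)"
    if "\<omega> \<in> space M" for \<omega>
    using split[OF that, of "\<lambda>j. X (r j) \<omega>"] split[OF that, of "\<lambda>j. X u \<omega>"] by simp_all
  have iE: "integrable M (\<lambda>\<omega>. indicator (E j) \<omega> * X s \<omega>)" if "j \<in> J" "0 \<le> s" for j s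
    using integrable_mult_indicator[OF E[OF that(1)] martingale_integrable[OF mart that(2)]] by simp
  have "integrable M (\<lambda>\<omega>. \<Sum>j\<in>J. indicator (E j) \<omega> * X (r j) \<omega>)"
    using iE r by (intro Bochner_Integration.integrable_sum) auto
  moreover have "integrable M (\<lambda>\<omega>. indicator C \<omega> * X (r (idx \<omega>)) \<omega>)
      \<longleftrightarrow> integrable M (\<lambda>\<omega>. \<Sum>j\<in>J. indicator (E j) \<omega> * X (r j) \<omega>)"
    using split_r by (intro Bochner_Integration.integrable_cong[OF refl]) auto
  ultimately show "integrable M (\<lambda>\<omega>. indicator C \<omega> * X (r (idx \<omega>)) \<omega>)" by simp
  have "(\<integral>\<omega>. indicator C \<omega> * X (r (idx \<omega>)) \<omega> \<partial>M) = (\<integral>\<omega>. (\<Sum>j\<in>J. indicator (E j) \<omega> * X (r j) \<omega>) \<partial>M)"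
    using split_r by (intro Bochner_Integration.integral_cong) auto
  also have "\<dots> = (\<Sum>j\<in>J. \<integral>\<omega>. indicator (E j) \<omega> * X (r j) \<omega> \<partial>M)"
    using iE r by (intro Bochner_Integration.integral_sum) auto
  also have "\<dots> = (\<Sum>j\<in>J. \<integral>\<omega>. indicator (E j) \<omega> * X u \<omega> \<partial>M)"
    using r C by (intro sum.cong martingale_set_integral_eq[OF mart, symmetric]) (auto simp: E_def)
  also have "\<dots> = (\<integral>\<omega>. (\<Sum>j\<in>J. indicator (E j) \<omega> * X u \<omega>) \<partial>M)"
    using iE u by (intro Bochner_Integration.integral_sum[symmetric]) auto
  also have "\<dots> = (\<integral>\<omega>. indicator C \<omega> * X u \<omega> \<partial>M)"
    using split_u by (intro Bochner_Integration.integral_cong) auto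
  finally show "(\<integral>\<omega>. indicator C \<omega> * X (r (idx \<omega>)) \<omega> \<partial>M) = (\<integral>\<omega>. indicator C \<omega> * X u \<omega> \<partial>M)" .
qed

lemma dyadic_index_set_in_F:
  assumes t: "0 \<le> t" "t \<le> u" and j: "j \<le> 2 ^ k"
    and stopping: "\<And>r. t \<le> r \<Longrightarrow> {\<omega>\<in>space M. \<rho> \<omega> < r} \<in> sets (F r)"
    and B: "B \<in> sets (F t)"
  shows "B \<inter> {\<omega>\<in>space M. dyadic_index t u k (\<rho> \<omega>) = j} \<in> sets (F (dyadic_point t u k j))"
proof -
  let ?p = "dyadic_point t u k"
  have p: "t \<le> ?p i" for i using dyadic_point_mono[OF t(2), of 0 i k] by (simp add: dyadic_point_def)
  have p0: "0 \<le> ?p i" for i using p[of i] t(1) by linarith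
  have "{\<omega>\<in>space M. dyadic_index t u k (\<rho> \<omega>) = j}
      = (if j = 2 ^ k then space M else {\<omega>\<in>space M. \<rho> \<omega> < ?p j})
        - (\<Union>i\<in>{..<j}. {\<omega>\<in>space M. \<rho> \<omega> < ?p i})"
    using j by (auto simp: dyadic_index_eq_iff)
  also have "\<dots> \<in> sets (F (?p j))"
  proof (rule sets.Diff)
    show "(if j = 2 ^ k then space M else {\<omega>\<in>space M. \<rho> \<omega> < ?p j}) \<in> sets (F (?p j))"
      using stopping[OF p] sets.top[of "F (?p j)"] space_F[OF p0] by (cases "j = 2 ^ k") simp_all
    show "(\<Union>i\<in>{..<j}. {\<omega>\<in>space M. \<rho> \<omega> < ?p i}) \<in> sets (F (?p j))"
    proof (rule sets.finite_UN)
      fix i assume "i \<in> {..<j}"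
      then have "?p i \<le> ?p j" by (intro dyadic_point_mono[OF t(2)]) auto
      then show "{\<omega>\<in>space M. \<rho> \<omega> < ?p i} \<in> sets (F (?p j))"
        by (rule sets_F_mono[OF p0 _ stopping[OF p]])
    qed simp
  qed
  finally show ?thesis
    using sets_F_mono[OF t(1) p[of j] B] by (rule sets.Int[rotated])
qed

lemma martingale_at_dyadic_approx:
  assumes mart: "martingale M F X" and t: "0 \<le> t" "t \<le> u"
    and C: "\<And>j. j \<le> 2 ^ k \<Longrightarrow>
      C \<inter> {\<omega>\<in>space M. dyadic_index t u k (\<rho> \<omega>) = j} \<in> sets (F (dyadic_point t u k j))"
  shows "integrable M (\<lambda>\<omega>. indicator C \<omega> * X (dyadic_approx t u k (\<rho> \<omega>)) \<omega>)"
    and "(\<integral>\<omega>. indicator C \<omega> * X (dyadic_approx t u k (\<rho> \<omega>)) \<omega> \<partial>M) = (\<integral>\<omega>. indicator C \<omega> * X u \<omega> \<partial>M)"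
proof -
  have r: "0 \<le> dyadic_point t u k j \<and> dyadic_point t u k j \<le> u" if "j \<in> {..2 ^ k}" for j
    using dyadic_point_bounds[OF t(2), of j k] that t(1) by simp
  have idx: "dyadic_index t u k (\<rho> \<omega>) \<in> {..2 ^ k}" for \<omega>
    by (simp add: dyadic_index_le)
  note simple = martingale_at_simple_time[where J="{..2 ^ k}" and r="dyadic_point t u k" and u=u
      and idx="\<lambda>\<omega>. dyadic_index t u k (\<rho> \<omega>)" and C=C, OF mart finite_atMost r idx,
      folded dyadic_approx_def]
  show "integrable M (\<lambda>\<omega>. indicator C \<omega> * X (dyadic_approx t u k (\<rho> \<omega>)) \<omega>)"
    using simple(1) C by simp
  show "(\<integral>\<omega>. indicator C \<omega> * X (dyadic_approx t u k (\<rho> \<omega>)) \<omega> \<partial>M) = (\<integral>\<omega>. indicator C \<omega> * X u \<omega> \<partial>M)"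
    using simple(2) C by simp
qed

lemma martingale_tail_at_dyadic_approx:
  fixes k :: nat
  assumes mart: "martingale M F X" and t: "0 \<le> t" "t \<le> u"
    and stopping: "\<And>r. t \<le> r \<Longrightarrow> {\<omega>\<in>space M. \<rho> \<omega> < r} \<in> sets (F r)"
    and B: "B \<in> sets (F t)" and K: "0 < K"
  defines "Y \<equiv> \<lambda>\<omega>. indicator B \<omega> * X (dyadic_approx t u k (\<rho> \<omega>)) \<omega>"
  shows "(\<integral>\<omega>. Y \<omega> * indicator {\<omega>\<in>space M. K < Y \<omega>} \<omega> \<partial>M)
    = (\<integral>\<omega>. X u \<omega> * indicator {\<omega>\<in>space M. K < Y \<omega>} \<omega> \<partial>M)"
proof -
  let ?C = "{\<omega>\<in>space M. K < Y \<omega>}" and ?p = "dyadic_point t u k"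
  have p: "0 \<le> ?p j" for j using dyadic_point_mono[OF t(2), of 0 j k] t(1) by (simp add: dyadic_point_def)
  have "?C \<inter> {\<omega>\<in>space M. dyadic_index t u k (\<rho> \<omega>) = j} \<in> sets (F (?p j))" if j: "j \<le> 2 ^ k" for j
  proof -
    have "{\<omega>\<in>space (F (?p j)). K < X (?p j) \<omega>} \<in> sets (F (?p j))"
      using martingale_measurable[OF mart p] by measurable
    moreover have "?C \<inter> {\<omega>\<in>space M. dyadic_index t u k (\<rho> \<omega>) = j}
        = (B \<inter> {\<omega>\<in>space M. dyadic_index t u k (\<rho> \<omega>) = j}) \<inter> {\<omega>\<in>space (F (?p j)). K < X (?p j) \<omega>}"
      using K by (auto simp: Y_def dyadic_approx_def space_F[OF p] indicator_def)
    ultimately show ?thesis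
      using dyadic_index_set_in_F[OF t j stopping B] by auto
  qed
  then have "(\<integral>\<omega>. indicator ?C \<omega> * X (dyadic_approx t u k (\<rho> \<omega>)) \<omega> \<partial>M)
      = (\<integral>\<omega>. indicator ?C \<omega> * X u \<omega> \<partial>M)"
    by (rule martingale_at_dyadic_approx(2)[OF mart t])
  moreover have "(\<lambda>\<omega>. Y \<omega> * indicator ?C \<omega>) = (\<lambda>\<omega>. indicator ?C \<omega> * X (dyadic_approx t u k (\<rho> \<omega>)) \<omega>)"
    using K by (auto simp: Y_def indicator_def)
  ultimately show ?thesis by (simp add: mult.commute)
qed

theorem optional_stopping_nonneg:
  assumes mart: "martingale M F X" and nonneg: "\<And>s \<omega>. 0 \<le> s \<Longrightarrow> \<omega> \<in> space M \<Longrightarrow> 0 \<le> X s \<omega>"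
    and rc: "AE \<omega> in M. \<forall>s\<ge>0. continuous (at_right s) (\<lambda>s. X s \<omega>)"
    and t: "0 \<le> t" "t \<le> u"
    and \<rho>: "\<And>\<omega>. \<omega> \<in> space M \<Longrightarrow> t \<le> \<rho> \<omega> \<and> \<rho> \<omega> \<le> u"
    and stopping: "\<And>r. t \<le> r \<Longrightarrow> {\<omega>\<in>space M. \<rho> \<omega> < r} \<in> sets (F r)"
    and B: "B \<in> sets (F t)"
  shows "integrable M (\<lambda>\<omega>. indicator B \<omega> * X (\<rho> \<omega>) \<omega>)"
    and "(\<integral>\<omega>. indicator B \<omega> * X (\<rho> \<omega>) \<omega> \<partial>M) = (\<integral>\<omega>. indicator B \<omega> * X t \<omega> \<partial>M)"
proof -
  define Y where "Y = (\<lambda>k \<omega>. indicator B \<omega> * X (dyadic_approx t u k (\<rho> \<omega>)) \<omega>)"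
  define c where "c = (\<integral>\<omega>. indicator B \<omega> * X u \<omega> \<partial>M)"
  note approx = martingale_at_dyadic_approx[OF mart t dyadic_index_set_in_F[OF t _ stopping B]]
  have Yi: "integrable M (Y k)" for k
    unfolding Y_def using approx(1) by simp
  have Ym: "Y k \<in> borel_measurable M" for k
    using Yi by (rule borel_measurable_integrable)
  have Yn: "0 \<le> Y k \<omega>" if "\<omega> \<in> space M" for k \<omega>
    using nonneg[OF order_trans[OF t(1) order_trans[OF _ dyadic_approx_bounds(1)]] that] \<rho>[OF that]
    by (simp add: Y_def indicator_def)
  have Yc: "integral\<^sup>L M (Y k) = c" for k
    unfolding Y_def c_def using approx(2) by simp
  have "AE \<omega> in M. (\<lambda>k. X (dyadic_approx t u k (\<rho> \<omega>)) \<omega>) \<longlonglongrightarrow> X (\<rho> \<omega>) \<omega>"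
    by (rule AE_tendsto_at_dyadic_approx[OF rc t(1) \<rho>])
  then have lim: "AE \<omega> in M. (\<lambda>k. Y k \<omega>) \<longlonglongrightarrow> indicator B \<omega> * X (\<rho> \<omega>) \<omega>"
  proof eventually_elim
    case (elim \<omega>)
    then show ?case unfolding Y_def by (rule tendsto_mult_left)
  qed
  have tail: "(\<integral>\<omega>. Y k \<omega> * indicator {\<omega>\<in>space M. K < Y k \<omega>} \<omega> \<partial>M)
      \<le> (\<integral>\<omega>. X u \<omega> * indicator {\<omega>\<in>space M. K < Y k \<omega>} \<omega> \<partial>M)" if "K > 0" for k K
    using martingale_tail_at_dyadic_approx[where k=k, OF mart t stopping B that] by (simp add: Y_def)
  have Xu: "integrable M (X u)" "\<And>\<omega>. \<omega> \<in> space M \<Longrightarrow> 0 \<le> X u \<omega>"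
    using martingale_integrable[OF mart] nonneg t by auto
  note limit = integral_limit_tail_dominated[OF Ym Yn Yi Yc borel_measurable_AE_limit[OF Ym lim] lim Xu tail]
  show "integrable M (\<lambda>\<omega>. indicator B \<omega> * X (\<rho> \<omega>) \<omega>)" by (rule limit(1))
  show "(\<integral>\<omega>. indicator B \<omega> * X (\<rho> \<omega>) \<omega> \<partial>M) = (\<integral>\<omega>. indicator B \<omega> * X t \<omega> \<partial>M)"
    using limit(2) martingale_set_integral_eq[OF mart t B] by (simp add: c_def)
qed

end

section \<open>Local martingales of class \<open>C\<^sub>0\<close>\<close>

lemma stopped_process_value:
  assumes "0 \<le> T \<omega>" "0 \<le> s"
  shows "\<exists>r. 0 \<le> r \<and> r \<le> s \<and> stopped_process T X s \<omega> = X r \<omega>"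
proof (cases "T \<omega> \<le> ereal s")
  case True
  with assms(1) obtain r where "T \<omega> = ereal r" by (cases "T \<omega>") auto
  with True assms(1) show ?thesis by (auto simp: stopped_process_def)
next
  case False
  with assms(2) show ?thesis by (auto simp: stopped_process_def)
qed

lemma stopped_process_eventually_eq:
  assumes "(\<lambda>n. T n \<omega>) \<longlonglongrightarrow> \<infinity>"
  shows "eventually (\<lambda>n. \<forall>s\<le>u. stopped_process (T n) X s \<omega> = X s \<omega>) sequentially"
proof -
  have "eventually (\<lambda>n. ereal u < T n \<omega>) sequentially"
    using assms by (rule order_tendstoD) simp
  then show ?thesis
    by eventually_elim (auto simp: stopped_process_def dest: order.strict_trans2[rotated])
qed

definition C0_path :: "(real \<Rightarrow> real) \<Rightarrow> bool" where
  "C0_path f \<longleftrightarrow> cadlag f \<and> no_positive_jumps f \<and> (f \<longlongrightarrow> 0) at_top"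

locale C0_local_martingale = usual_filtered_space +
  fixes N :: "real \<Rightarrow> 'a \<Rightarrow> real"
  assumes class_C0: "class_C0 M F N" and N_0: "\<forall>\<omega>\<in>space M. N 0 \<omega> = 1"
begin

lemma AE_C0_path: "AE \<omega> in M. C0_path (\<lambda>t. N t \<omega>)"
proof -
  have "AE \<omega> in M. cadlag (\<lambda>t. N t \<omega>)"
    using class_C0 unfolding class_C0_def local_martingale_def cadlag_process_def by blast
  moreover have "AE \<omega> in M. \<forall>t>0. N t \<omega> \<le> Lim (at_left t) (\<lambda>s. N s \<omega>)"
    and "AE \<omega> in M. ((\<lambda>t. N t \<omega>) \<longlongrightarrow> 0) at_top"
    using class_C0 unfolding class_C0_def by blast+
  ultimately show ?thesis
    by eventually_elim (simp add: C0_path_def no_positive_jumps_def)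
qed

lemma N_pos: "0 \<le> t \<Longrightarrow> \<omega> \<in> space M \<Longrightarrow> 0 < N t \<omega>"
  using class_C0 unfolding class_C0_def by blast

lemma N_measurable_F: "0 \<le> t \<Longrightarrow> N t \<in> borel_measurable (F t)"
  using class_C0 unfolding class_C0_def local_martingale_def adapted_def by blast

lemma N_measurable: "0 \<le> t \<Longrightarrow> N t \<in> borel_measurable M"
  by (rule measurable_F_imp_measurable[OF _ N_measurable_F])

lemma localizing_sequence:
  obtains T :: "nat \<Rightarrow> 'a \<Rightarrow> ereal" where "\<And>n. martingale M F (stopped_process (T n) N)"
    "\<And>n \<omega>. \<omega> \<in> space M \<Longrightarrow> 0 \<le> T n \<omega>" "AE \<omega> in M. (\<lambda>n. T n \<omega>) \<longlonglongrightarrow> \<infinity>"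
proof -
  have "\<exists>T :: nat \<Rightarrow> 'a \<Rightarrow> ereal. (\<forall>n. stopping_time_ext F (T n)) \<and>
      (\<forall>n. \<forall>\<omega>\<in>space M. 0 \<le> T n \<omega>) \<and>
      (AE \<omega> in M. incseq (\<lambda>n. T n \<omega>) \<and> (\<lambda>n. T n \<omega>) \<longlonglongrightarrow> \<infinity>) \<and>
      (\<forall>n. martingale M F (stopped_process (T n) N))"
    using class_C0 unfolding class_C0_def local_martingale_def by (elim conjE) assumption
  then obtain T :: "nat \<Rightarrow> 'a \<Rightarrow> ereal" where T: "\<forall>n. \<forall>\<omega>\<in>space M. 0 \<le> T n \<omega>"
    "AE \<omega> in M. incseq (\<lambda>n. T n \<omega>) \<and> (\<lambda>n. T n \<omega>) \<longlonglongrightarrow> \<infinity>"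
    "\<forall>n. martingale M F (stopped_process (T n) N)"
    by blast
  from T(2) have "AE \<omega> in M. (\<lambda>n. T n \<omega>) \<longlonglongrightarrow> \<infinity>" by eventually_elim simp
  with T(1,3) show ?thesis by (intro that) auto
qed

lemma running_sup_ge_1:
  "C0_path (\<lambda>s. N s \<omega>) \<Longrightarrow> \<omega> \<in> space M \<Longrightarrow> 0 \<le> t \<Longrightarrow> 1 \<le> running_sup N t \<omega>"
  using running_sup_upper[of N \<omega> 0 t] N_0 unfolding C0_path_def by auto

lemma running_sup_measurable_F:
  assumes t: "0 \<le> t"
  shows "running_sup N t \<in> borel_measurable (F t)"
proof (rule borel_measurable_F_AE_eq[OF t])
  let ?Q = "insert t ({0..t} \<inter> \<rat>)"
  show "AE \<omega> in M. running_sup N t \<omega> = real_of_ereal (SUP q\<in>?Q. ereal (N q \<omega>))"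
    using AE_C0_path
  proof eventually_elim
    case (elim \<omega>)
    then have c: "cadlag (\<lambda>s. N s \<omega>)" unfolding C0_path_def by blast
    have "bdd_above ((\<lambda>s. N s \<omega>) ` ?Q)"
      by (rule bdd_above_mono[OF cadlag_bdd_above_interval[OF c, of t]]) (use t in auto)
    then show ?case
      unfolding running_sup_eq_SUP_rationals[of N \<omega>, OF c t] by (subst ereal_cSUP) auto
  qed
  have [measurable]: "(\<lambda>\<omega>. ereal (N q \<omega>)) \<in> borel_measurable (F t)" if "q \<in> ?Q" for q
  proof -
    have "N q \<in> borel_measurable (F t)"
      using that t by (intro measurable_F_mono[OF _ _ N_measurable_F]) auto
    then show ?thesis by measurable
  qed
  have "(\<lambda>\<omega>. SUP q\<in>?Q. ereal (N q \<omega>)) \<in> borel_measurable (F t)"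
    by (rule borel_measurable_SUP) (auto intro: countable_Int2 countable_rat)
  then show "(\<lambda>\<omega>. real_of_ereal (SUP q\<in>?Q. ereal (N q \<omega>))) \<in> borel_measurable (F t)"
    by measurable
qed

lemma running_sup_measurable: "0 \<le> t \<Longrightarrow> running_sup N t \<in> borel_measurable M"
  by (rule measurable_F_imp_measurable[OF _ running_sup_measurable_F])

lemma terminal_sup_measurable: "terminal_sup N \<in> borel_measurable M"
proof (rule borel_measurable_AE_limit)
  show "AE \<omega> in M. (\<lambda>n. running_sup N (real n) \<omega>) \<longlonglongrightarrow> terminal_sup N \<omega>"
    using AE_C0_path
  proof eventually_elim
    case (elim \<omega>)
    then have c: "cadlag (\<lambda>s. N s \<omega>)" and z: "((\<lambda>s. N s \<omega>) \<longlongrightarrow> 0) at_top"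
      unfolding C0_path_def by blast+
    show ?case
      unfolding terminal_sup_eq_SUP[of N \<omega>, OF c z]
      by (rule filterlim_compose[OF running_sup_tendsto_SUP[of N \<omega>, OF c z] filterlim_real_sequentially])
  qed
qed (rule running_sup_measurable, simp)

text \<open>Via rational times the event \<open>{\<rho> < r}\<close> is \<open>F r\<close>-measurable only up to the null set of
  irregular paths; the completeness of the filtration absorbs it.\<close>

lemma first_passage_upto_stopping:
  assumes t: "0 \<le> t" "t \<le> r"
  shows "{\<omega>\<in>space M. first_passage_upto (\<lambda>s. N s \<omega>) t y u < r} \<in> sets (F r)"
proof (cases "r \<le> u")
  case True
  let ?H = "{\<omega>\<in>space M. \<exists>q\<in>{q \<in> \<rat>. t \<le> q \<and> q < r}. y < N q \<omega>}"
  have "?H = (\<Union>q\<in>{q \<in> \<rat>. t \<le> q \<and> q < r}. {\<omega>\<in>space (F r). y < N q \<omega>})"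
    using t by (auto simp: space_F)
  also have "\<dots> \<in> sets (F r)"
  proof (rule sets.countable_UN'')
    show "countable {q \<in> \<rat>. t \<le> q \<and> q < r}"
      by (rule countable_subset[OF _ countable_rat]) auto
    fix q assume "q \<in> {q \<in> \<rat>. t \<le> q \<and> q < r}"
    then have [measurable]: "N q \<in> borel_measurable (F r)"
      using t by (intro measurable_F_mono[OF _ _ N_measurable_F]) auto
    show "{\<omega>\<in>space (F r). y < N q \<omega>} \<in> sets (F r)" by measurable
  qed
  finally have H: "?H \<in> sets (F r)" .
  show ?thesis
  proof (rule sets_F_AE_eq[OF _ H])
    show "AE \<omega> in M. \<omega> \<in> {\<omega>\<in>space M. first_passage_upto (\<lambda>s. N s \<omega>) t y u < r} \<longleftrightarrow> \<omega> \<in> ?H"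
      using AE_C0_path
    proof eventually_elim
      case (elim \<omega>)
      then have "cadlag (\<lambda>s. N s \<omega>)" unfolding C0_path_def by blast
      then show ?case
        using first_passage_upto_less_iff[OF t(2) True, of "\<lambda>s. N s \<omega>" y]
          cadlag_exceeds_iff_rational[of "\<lambda>s. N s \<omega>" t r y] t(1) by auto
    qed
  qed (use t in auto)
next
  case False
  then have "first_passage_upto (\<lambda>s. N s \<omega>) t y u < r" for \<omega>
    using first_passage_upto_le[of "\<lambda>s. N s \<omega>" t y u] by linarith
  then have "{\<omega>\<in>space M. first_passage_upto (\<lambda>s. N s \<omega>) t y u < r} = space (F r)"
    using t by (auto simp: space_F)
  then show ?thesis by simp
qed

lemma stopped_process_pos:
  assumes "\<omega> \<in> space M" "0 \<le> T \<omega>" "0 \<le> s"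
  shows "0 < stopped_process T N s \<omega>"
  using stopped_process_value[of T \<omega> s N, OF assms(2,3)] N_pos assms(1) by auto

lemma N_le_before_first_passage:
  assumes \<omega>: "C0_path (\<lambda>s. N s \<omega>)" and t: "0 \<le> t" "t \<le> u" and le: "running_sup N t \<omega> \<le> y"
    and s: "0 \<le> s" "s \<le> first_passage_upto (\<lambda>s. N s \<omega>) t y u"
  shows "N s \<omega> \<le> y"
proof -
  have c: "cadlag (\<lambda>s. N s \<omega>)" and nj: "no_positive_jumps (\<lambda>s. N s \<omega>)"
    using \<omega> unfolding C0_path_def by blast+
  show ?thesis by (rule le_before_first_passage_upto[OF c nj t running_sup_leD[of N \<omega>, OF c le] s])
qed

lemma stopped_process_le_before_first_passage:
  assumes \<omega>: "C0_path (\<lambda>s. N s \<omega>)" and t: "0 \<le> t" "t \<le> u" and le: "running_sup N t \<omega> \<le> y"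
    and T: "0 \<le> T \<omega>" and s: "0 \<le> s" "s \<le> first_passage_upto (\<lambda>s. N s \<omega>) t y u"
  shows "stopped_process T N s \<omega> \<le> y"
proof -
  obtain r where r: "0 \<le> r" "r \<le> s" "stopped_process T N s \<omega> = N r \<omega>"
    using stopped_process_value[of T \<omega> s N, OF T s(1)] by blast
  have "N r \<omega> \<le> y"
    using N_le_before_first_passage[OF \<omega> t le r(1)] r(2) s(2) by simp
  then show ?thesis using r(3) by simp
qed

lemma optional_stopping_at_first_passage:
  fixes y :: real
  assumes mart: "martingale M F (stopped_process T N)" and T: "\<And>\<omega>. \<omega> \<in> space M \<Longrightarrow> 0 \<le> T \<omega>"
    and t: "0 \<le> t" "t \<le> u" and B: "B \<in> sets (F t)"
  defines "\<rho> \<equiv> \<lambda>\<omega>. first_passage_upto (\<lambda>s. N s \<omega>) t y u"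
  shows "integrable M (\<lambda>\<omega>. indicator B \<omega> * stopped_process T N (\<rho> \<omega>) \<omega>)"
    and "(\<integral>\<omega>. indicator B \<omega> * stopped_process T N (\<rho> \<omega>) \<omega> \<partial>M)
       = (\<integral>\<omega>. indicator B \<omega> * stopped_process T N t \<omega> \<partial>M)"
proof -
  have nonneg: "0 \<le> stopped_process T N s \<omega>" if "0 \<le> s" "\<omega> \<in> space M" for s \<omega>
    using stopped_process_pos[of \<omega> T s, OF that(2) T[OF that(2)] that(1)] by simp
  have rc: "AE \<omega> in M. \<forall>s\<ge>0. continuous (at_right s) (\<lambda>s. stopped_process T N s \<omega>)"
    using AE_C0_path AE_space
  proof eventually_elim
    case (elim \<omega>)
    then have "cadlag (\<lambda>s. N s \<omega>)" unfolding C0_path_def by blast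
    with T[OF elim(2)] show ?case
      unfolding stopped_process_def by (auto intro!: stopped_path_continuous_at_right)
  qed
  have \<rho>: "t \<le> \<rho> \<omega> \<and> \<rho> \<omega> \<le> u" if "\<omega> \<in> space M" for \<omega>
    using first_passage_upto_ge[OF t(2)] first_passage_upto_le by (simp add: \<rho>_def)
  have stopping: "{\<omega>\<in>space M. \<rho> \<omega> < r} \<in> sets (F r)" if "t \<le> r" for r
    unfolding \<rho>_def using t(1) that by (rule first_passage_upto_stopping)
  note os = optional_stopping_nonneg[OF mart nonneg rc t \<rho> stopping B]
  show "integrable M (\<lambda>\<omega>. indicator B \<omega> * stopped_process T N (\<rho> \<omega>) \<omega>)" by (rule os(1))
  show "(\<integral>\<omega>. indicator B \<omega> * stopped_process T N (\<rho> \<omega>) \<omega> \<partial>M)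
      = (\<integral>\<omega>. indicator B \<omega> * stopped_process T N t \<omega> \<partial>M)" by (rule os(2))
qed

text \<open>Up to the first passage above \<open>y\<close> the stopped processes stay below \<open>y\<close>, so dominated
  convergence removes the localisation.\<close>

lemma tendsto_integral_stopped_before_first_passage:
  assumes T: "\<And>n \<omega>. \<omega> \<in> space M \<Longrightarrow> 0 \<le> T n \<omega>" "AE \<omega> in M. (\<lambda>n. T n \<omega>) \<longlonglongrightarrow> \<infinity>"
    and t: "0 \<le> t" "t \<le> u" and y: "0 < y" and B_le: "\<And>\<omega>. \<omega> \<in> B \<Longrightarrow> running_sup N t \<omega> \<le> y"
    and \<sigma>: "\<And>\<omega>. t \<le> \<sigma> \<omega> \<and> \<sigma> \<omega> \<le> first_passage_upto (\<lambda>s. N s \<omega>) t y u"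
    and meas: "\<And>n. (\<lambda>\<omega>. indicator B \<omega> * stopped_process (T n) N (\<sigma> \<omega>) \<omega>) \<in> borel_measurable M"
  shows "(\<lambda>\<omega>. indicator B \<omega> * N (\<sigma> \<omega>) \<omega>) \<in> borel_measurable M"
    and "(\<lambda>n. \<integral>\<omega>. indicator B \<omega> * stopped_process (T n) N (\<sigma> \<omega>) \<omega> \<partial>M)
      \<longlonglongrightarrow> (\<integral>\<omega>. indicator B \<omega> * N (\<sigma> \<omega>) \<omega> \<partial>M)"
proof -
  have \<sigma>_u: "\<sigma> \<omega> \<le> u" for \<omega> using \<sigma>[of \<omega>] first_passage_upto_le by (meson order_trans)
  have conv: "AE \<omega> in M. (\<lambda>n. indicator B \<omega> * stopped_process (T n) N (\<sigma> \<omega>) \<omega>)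
      \<longlonglongrightarrow> indicator B \<omega> * N (\<sigma> \<omega>) \<omega>"
    using T(2)
  proof eventually_elim
    case (elim \<omega>)
    have "eventually (\<lambda>n. indicator B \<omega> * stopped_process (T n) N (\<sigma> \<omega>) \<omega>
        = indicator B \<omega> * N (\<sigma> \<omega>) \<omega>) sequentially"
      using stopped_process_eventually_eq[of T \<omega> u N, OF elim] by eventually_elim (simp add: \<sigma>_u)
    then show ?case by (rule tendsto_eventually)
  qed
  show lim_meas: "(\<lambda>\<omega>. indicator B \<omega> * N (\<sigma> \<omega>) \<omega>) \<in> borel_measurable M"
    by (rule borel_measurable_AE_limit[OF meas conv])
  show "(\<lambda>n. \<integral>\<omega>. indicator B \<omega> * stopped_process (T n) N (\<sigma> \<omega>) \<omega> \<partial>M)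
      \<longlonglongrightarrow> (\<integral>\<omega>. indicator B \<omega> * N (\<sigma> \<omega>) \<omega> \<partial>M)"
  proof (rule integral_dominated_convergence[where w="\<lambda>_. y"])
    show "AE \<omega> in M. norm (indicator B \<omega> * stopped_process (T n) N (\<sigma> \<omega>) \<omega>) \<le> y" for n
      using AE_C0_path AE_space
    proof eventually_elim
      case (elim \<omega>)
      have \<sigma>\<omega>: "0 \<le> \<sigma> \<omega>" using \<sigma>[of \<omega>] t(1) by auto
      show ?case
      proof (cases "\<omega> \<in> B")
        case True
        then show ?thesis
          using stopped_process_pos[of \<omega> "T n" "\<sigma> \<omega>", OF elim(2) T(1)[OF elim(2)] \<sigma>\<omega>]
            stopped_process_le_before_first_passage[where T="T n" and s="\<sigma> \<omega>",
              OF elim(1) t B_le[OF True] T(1)[OF elim(2)] \<sigma>\<omega>]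
            \<sigma>[of \<omega>] by simp
      qed (use y in simp)
    qed
  qed (use lim_meas meas conv in auto)
qed

lemma integral_at_first_passage:
  assumes t: "0 \<le> t" "t \<le> u" and y: "0 < y" and B: "B \<in> sets (F t)"
    and B_le: "\<And>\<omega>. \<omega> \<in> B \<Longrightarrow> running_sup N t \<omega> \<le> y"
  shows "(\<lambda>\<omega>. indicator B \<omega> * N (first_passage_upto (\<lambda>s. N s \<omega>) t y u) \<omega>) \<in> borel_measurable M"
    and "(\<integral>\<omega>. indicator B \<omega> * N (first_passage_upto (\<lambda>s. N s \<omega>) t y u) \<omega> \<partial>M)
       = (\<integral>\<omega>. indicator B \<omega> * N t \<omega> \<partial>M)"
proof -
  obtain T where T: "\<And>n. martingale M F (stopped_process (T n) N)"
    "\<And>n \<omega>. \<omega> \<in> space M \<Longrightarrow> 0 \<le> T n \<omega>" "AE \<omega> in M. (\<lambda>n. T n \<omega>) \<longlonglongrightarrow> \<infinity>"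
    by (rule localizing_sequence) blast
  let ?\<rho> = "\<lambda>\<omega>. first_passage_upto (\<lambda>s. N s \<omega>) t y u"
  have \<rho>: "t \<le> ?\<rho> \<omega>" for \<omega> by (rule first_passage_upto_ge[OF t(2)])
  note stopped = optional_stopping_at_first_passage[OF T(1,2) t B, where y=y]
  have meas_\<rho>: "(\<lambda>\<omega>. indicator B \<omega> * stopped_process (T n) N (?\<rho> \<omega>) \<omega>) \<in> borel_measurable M"
    for n using stopped(1)[THEN borel_measurable_integrable] by simp
  have meas_t: "(\<lambda>\<omega>. indicator B \<omega> * stopped_process (T n) N t \<omega>) \<in> borel_measurable M" for n
    using measurable_F_imp_measurable[OF t(1) martingale_measurable[OF T(1) t(1)]]
      sets_F_subset[OF t(1) B] by simp
  note limit = tendsto_integral_stopped_before_first_passage[where T=T and B=B, OF T(2,3) t y B_le]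
  note lim_\<rho> = limit[where \<sigma>="?\<rho>"] and lim_t = limit[where \<sigma>="\<lambda>_. t"]
  show "(\<lambda>\<omega>. indicator B \<omega> * N (?\<rho> \<omega>) \<omega>) \<in> borel_measurable M"
    using lim_\<rho>(1) \<rho> meas_\<rho> by simp
  have "(\<lambda>n. \<integral>\<omega>. indicator B \<omega> * stopped_process (T n) N (?\<rho> \<omega>) \<omega> \<partial>M)
      \<longlonglongrightarrow> (\<integral>\<omega>. indicator B \<omega> * N (?\<rho> \<omega>) \<omega> \<partial>M)"
    using lim_\<rho>(2) \<rho> meas_\<rho> by simp
  moreover have "(\<lambda>n. \<integral>\<omega>. indicator B \<omega> * stopped_process (T n) N (?\<rho> \<omega>) \<omega> \<partial>M)
      \<longlonglongrightarrow> (\<integral>\<omega>. indicator B \<omega> * N t \<omega> \<partial>M)"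
    using lim_t(2) \<rho> meas_t stopped(2) by simp
  ultimately show "(\<integral>\<omega>. indicator B \<omega> * N (?\<rho> \<omega>) \<omega> \<partial>M) = (\<integral>\<omega>. indicator B \<omega> * N t \<omega> \<partial>M)"
    by (rule LIMSEQ_unique)
qed

text \<open>At its first passage above \<open>y\<close> the process equals \<open>y\<close>; on paths that never
  get there, \<open>N\<^sub>u \<rightarrow> 0\<close> as the horizon \<open>u \<rightarrow> \<infinity>\<close>.\<close>

lemma maximal_identity:
  assumes t: "0 \<le> t" and y: "0 < y" and B: "B \<in> sets (F t)"
    and B_le: "\<And>\<omega>. \<omega> \<in> B \<Longrightarrow> running_sup N t \<omega> \<le> y"
  shows "y * prob (B \<inter> {\<omega>\<in>space M. y < terminal_sup N \<omega>}) = (\<integral>\<omega>. indicator B \<omega> * N t \<omega> \<partial>M)"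
proof -
  define H where "H = B \<inter> {\<omega>\<in>space M. y < terminal_sup N \<omega>}"
  define u where "u m = t + real m" for m :: nat
  define Y where "Y m \<omega> = indicator B \<omega> * N (first_passage_upto (\<lambda>s. N s \<omega>) t y (u m)) \<omega>" for m \<omega>
  have tu: "t \<le> u m" for m by (simp add: u_def)
  have u_top: "filterlim u at_top sequentially"
    unfolding u_def by (rule filterlim_tendsto_add_at_top[OF tendsto_const filterlim_real_sequentially])
  have H_sets: "H \<in> sets M"
    using sets_F_subset[OF t B] terminal_sup_measurable unfolding H_def by measurable
  note stopped = integral_at_first_passage[OF t(1) tu y B B_le, folded Y_def]
  have lim: "AE \<omega> in M. (\<lambda>m. Y m \<omega>) \<longlonglongrightarrow> y * indicator H \<omega>"
    using AE_C0_path AE_space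
  proof eventually_elim
    case (elim \<omega>)
    show ?case
    proof (cases "\<omega> \<in> B")
      case True
      have c: "cadlag (\<lambda>s. N s \<omega>)" and nj: "no_positive_jumps (\<lambda>s. N s \<omega>)"
        and z: "((\<lambda>s. N s \<omega>) \<longlongrightarrow> 0) at_top" using elim(1) unfolding C0_path_def by blast+
      have "y * indicator H \<omega> = (if y < terminal_sup N \<omega> then y else 0)"
        using True elim(2) by (simp add: H_def split: split_indicator)
      then show ?thesis
        using filterlim_compose[OF tendsto_at_first_passage_upto[of N \<omega>, OF c nj z t B_le[OF True]] u_top]
          True by (simp add: Y_def)
    qed (simp add: Y_def H_def)
  qed
  have "(\<lambda>m. integral\<^sup>L M (Y m)) \<longlonglongrightarrow> (\<integral>\<omega>. y * indicator H \<omega> \<partial>M)"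
  proof (rule integral_dominated_convergence[where w="\<lambda>_. y"])
    show "AE \<omega> in M. norm (Y m \<omega>) \<le> y" for m
      using AE_C0_path AE_space
    proof eventually_elim
      case (elim \<omega>)
      have \<rho>: "0 \<le> first_passage_upto (\<lambda>s. N s \<omega>) t y (u m)"
        using first_passage_upto_ge[OF tu[of m]] t by (meson order_trans)
      show ?case
      proof (cases "\<omega> \<in> B")
        case True
        have "N (first_passage_upto (\<lambda>s. N s \<omega>) t y (u m)) \<omega> \<le> y"
          by (rule N_le_before_first_passage[OF elim(1) t tu[of m] B_le[OF True] \<rho> order_refl])
        then show ?thesis using True N_pos[OF \<rho> elim(2)] by (simp add: Y_def)
      qed (use y in \<open>simp add: Y_def\<close>)
    qed
  qed (use stopped(1) H_sets lim in auto)
  then have "(\<integral>\<omega>. y * indicator H \<omega> \<partial>M) = (\<integral>\<omega>. indicator B \<omega> * N t \<omega> \<partial>M)"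
    using stopped(2) by (simp add: LIMSEQ_const_iff)
  then show ?thesis using H_sets by (simp add: H_def)
qed


lemma maximal_identity_nn_integral:
  assumes t: "0 \<le> t" and A: "A \<in> sets (F t)" and x: "0 < x"
  shows "(\<integral>\<^sup>+\<omega>. (if \<omega> \<in> A \<and> running_sup N t \<omega> \<le> x \<and> x < terminal_sup N \<omega> then ennreal (1 / x) else 0) \<partial>M)
       = (\<integral>\<^sup>+\<omega>. (if \<omega> \<in> A \<and> running_sup N t \<omega> \<le> x then ennreal (N t \<omega> / x\<^sup>2) else 0) \<partial>M)"
proof -
  define B where "B = A \<inter> {\<omega>\<in>space M. running_sup N t \<omega> \<le> x}"
  define H where "H = B \<inter> {\<omega>\<in>space M. x < terminal_sup N \<omega>}"
  have B_F: "B \<in> sets (F t)"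
  proof -
    have [measurable]: "running_sup N t \<in> borel_measurable (F t)" by (rule running_sup_measurable_F[OF t])
    have "{\<omega>\<in>space (F t). running_sup N t \<omega> \<le> x} \<in> sets (F t)" by measurable
    then show ?thesis unfolding B_def space_F[OF t] using A by (rule sets.Int[rotated])
  qed
  have B_M: "B \<in> sets M" by (rule sets_F_subset[OF t B_F])
  have H_M: "H \<in> sets M" unfolding H_def using B_M terminal_sup_measurable by measurable
  have NB: "integrable M (\<lambda>\<omega>. indicator B \<omega> * N t \<omega>)"
  proof (rule Bochner_Integration.integrable_bound[of _ "\<lambda>_. x"])
    show "(\<lambda>\<omega>. indicator B \<omega> * N t \<omega>) \<in> borel_measurable M"
      using B_M N_measurable[OF t] by measurable
    show "AE \<omega> in M. norm (indicator B \<omega> * N t \<omega>) \<le> norm x"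
      using AE_C0_path AE_space
    proof eventually_elim
      case (elim \<omega>)
      then have "N t \<omega> \<le> running_sup N t \<omega>"
        using running_sup_upper[of N \<omega> t t] t unfolding C0_path_def by simp
      then show ?case using N_pos[OF t elim(2)] x by (auto simp: B_def indicator_def)
    qed
  qed simp
  have "x * prob H = (\<integral>\<omega>. indicator B \<omega> * N t \<omega> \<partial>M)"
    unfolding H_def by (rule maximal_identity[OF t x B_F]) (simp add: B_def)
  then have prob_H: "prob H / x = (\<integral>\<omega>. indicator B \<omega> * N t \<omega> \<partial>M) / x\<^sup>2"
    using x by (simp add: power2_eq_square field_simps)
  have "(\<integral>\<^sup>+\<omega>. (if \<omega> \<in> A \<and> running_sup N t \<omega> \<le> x \<and> x < terminal_sup N \<omega> then ennreal (1 / x) else 0) \<partial>M)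
      = (\<integral>\<^sup>+\<omega>. ennreal (1 / x) * indicator H \<omega> \<partial>M)"
    by (rule nn_integral_cong) (auto simp: H_def B_def indicator_def)
  also have "\<dots> = ennreal (1 / x) * ennreal (prob H)"
    using H_M by (simp add: nn_integral_cmult_indicator emeasure_eq_measure)
  also have "\<dots> = ennreal (prob H / x)"
    using x by (simp add: ennreal_mult[symmetric])
  also have "\<dots> = ennreal (\<integral>\<omega>. indicator B \<omega> * N t \<omega> / x\<^sup>2 \<partial>M)"
    unfolding prob_H by simp
  also have "\<dots> = (\<integral>\<^sup>+\<omega>. ennreal (indicator B \<omega> * N t \<omega> / x\<^sup>2) \<partial>M)"
  proof (rule nn_integral_eq_integral[symmetric])
    show "integrable M (\<lambda>\<omega>. indicator B \<omega> * N t \<omega> / x\<^sup>2)" using NB by simp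
    show "AE \<omega> in M. 0 \<le> indicator B \<omega> * N t \<omega> / x\<^sup>2"
      using N_pos[OF t] by (intro AE_I2) (simp add: indicator_def less_imp_le)
  qed
  also have "\<dots> = (\<integral>\<^sup>+\<omega>. (if \<omega> \<in> A \<and> running_sup N t \<omega> \<le> x then ennreal (N t \<omega> / x\<^sup>2) else 0) \<partial>M)"
    by (rule nn_integral_cong) (auto simp: B_def indicator_def)
  finally show ?thesis .
qed

lemma nn_integral_layer_log:
  assumes "C0_path (\<lambda>s. N s \<omega>)" "\<omega> \<in> space M" "0 \<le> t"
  shows "(\<integral>\<^sup>+x. (if running_sup N t \<omega> \<le> x \<and> x < terminal_sup N \<omega> \<and> 0 < x then ennreal (1 / x) else 0) \<partial>lborel)
    = ennreal (ln (terminal_sup N \<omega>) - ln (running_sup N t \<omega>))"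
proof -
  have a: "1 \<le> running_sup N t \<omega>" by (rule running_sup_ge_1[OF assms])
  have "running_sup N t \<omega> \<le> terminal_sup N \<omega>"
    using assms(1,3) unfolding C0_path_def by (intro running_sup_le_terminal_sup) auto
  moreover have "(if running_sup N t \<omega> \<le> x \<and> x < terminal_sup N \<omega> \<and> 0 < x then ennreal (1 / x) else 0)
      = (if running_sup N t \<omega> \<le> x \<and> x < terminal_sup N \<omega> then ennreal (1 / x) else 0)" for x
    using a by auto
  ultimately show ?thesis using nn_integral_inverse_interval a by simp
qed

lemma nn_integral_layer_ratio:
  assumes "C0_path (\<lambda>s. N s \<omega>)" "\<omega> \<in> space M" "0 \<le> t"
  shows "(\<integral>\<^sup>+x. (if running_sup N t \<omega> \<le> x \<and> 0 < x then ennreal (N t \<omega> / x\<^sup>2) else 0) \<partial>lborel)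
    = ennreal (N t \<omega> / running_sup N t \<omega>)"
proof -
  have a: "1 \<le> running_sup N t \<omega>" by (rule running_sup_ge_1[OF assms])
  have "(if running_sup N t \<omega> \<le> x \<and> 0 < x then ennreal (N t \<omega> / x\<^sup>2) else 0)
      = (if running_sup N t \<omega> \<le> x then ennreal (N t \<omega> / x\<^sup>2) else 0)" for x
    using a by auto
  then show ?thesis using nn_integral_inverse_square a N_pos[OF assms(3,2)] by simp
qed

text \<open>Integrate the maximal identity against \<open>dx / x\<close> over \<open>x \<ge> S\<^sub>t\<close> and apply Tonelli.\<close>

lemma nn_integral_log_increment:
  assumes t: "0 \<le> t" and A: "A \<in> sets (F t)"
  shows "(\<integral>\<^sup>+\<omega>. indicator A \<omega> * ennreal (ln (terminal_sup N \<omega>) - ln (running_sup N t \<omega>)) \<partial>M)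
       = (\<integral>\<^sup>+\<omega>. indicator A \<omega> * ennreal (N t \<omega> / running_sup N t \<omega>) \<partial>M)"
proof -
  have [measurable]: "running_sup N t \<in> borel_measurable M" "terminal_sup N \<in> borel_measurable M"
    "N t \<in> borel_measurable M" "A \<in> sets M"
    using running_sup_measurable[OF t] terminal_sup_measurable N_measurable[OF t] sets_F_subset[OF t A]
    by auto
  define H where "H \<omega> x = (if \<omega> \<in> A \<and> running_sup N t \<omega> \<le> x \<and> x < terminal_sup N \<omega> \<and> 0 < x
      then ennreal (1 / x) else 0)" for \<omega> x
  define G where "G \<omega> x = (if \<omega> \<in> A \<and> running_sup N t \<omega> \<le> x \<and> 0 < x
      then ennreal (N t \<omega> / x\<^sup>2) else 0)" for \<omega> x
  interpret P: pair_sigma_finite M lborel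
    unfolding pair_sigma_finite_def
    using prob_space_imp_sigma_finite[OF usual_filtrationD(1)[OF usual_filtration]] sigma_finite_lborel
    by blast
  have Hm: "(\<lambda>(\<omega>, x). H \<omega> x) \<in> borel_measurable (M \<Otimes>\<^sub>M lborel)" unfolding H_def by measurable
  have Gm: "(\<lambda>(\<omega>, x). G \<omega> x) \<in> borel_measurable (M \<Otimes>\<^sub>M lborel)" unfolding G_def by measurable
  have "(\<integral>\<^sup>+\<omega>. indicator A \<omega> * ennreal (ln (terminal_sup N \<omega>) - ln (running_sup N t \<omega>)) \<partial>M)
      = (\<integral>\<^sup>+\<omega>. (\<integral>\<^sup>+x. H \<omega> x \<partial>lborel) \<partial>M)"
  proof (rule nn_integral_cong_AE)
    show "AE \<omega> in M. indicator A \<omega> * ennreal (ln (terminal_sup N \<omega>) - ln (running_sup N t \<omega>))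
        = (\<integral>\<^sup>+x. H \<omega> x \<partial>lborel)"
      using AE_C0_path AE_space
    proof eventually_elim
      case (elim \<omega>)
      then show ?case using nn_integral_layer_log[OF elim t] by (cases "\<omega> \<in> A") (simp_all add: H_def)
    qed
  qed
  also have "\<dots> = (\<integral>\<^sup>+x. (\<integral>\<^sup>+\<omega>. H \<omega> x \<partial>M) \<partial>lborel)"
    by (rule P.Fubini'[OF Hm, symmetric])
  also have "\<dots> = (\<integral>\<^sup>+x. (\<integral>\<^sup>+\<omega>. G \<omega> x \<partial>M) \<partial>lborel)"
  proof (rule nn_integral_cong)
    fix x :: real
    show "(\<integral>\<^sup>+\<omega>. H \<omega> x \<partial>M) = (\<integral>\<^sup>+\<omega>. G \<omega> x \<partial>M)"
      using maximal_identity_nn_integral[OF t A, of x] by (cases "0 < x") (simp_all add: H_def G_def)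
  qed
  also have "\<dots> = (\<integral>\<^sup>+\<omega>. (\<integral>\<^sup>+x. G \<omega> x \<partial>lborel) \<partial>M)"
    by (rule P.Fubini'[OF Gm])
  also have "\<dots> = (\<integral>\<^sup>+\<omega>. indicator A \<omega> * ennreal (N t \<omega> / running_sup N t \<omega>) \<partial>M)"
  proof (rule nn_integral_cong_AE)
    show "AE \<omega> in M. (\<integral>\<^sup>+x. G \<omega> x \<partial>lborel) = indicator A \<omega> * ennreal (N t \<omega> / running_sup N t \<omega>)"
      using AE_C0_path AE_space
    proof eventually_elim
      case (elim \<omega>)
      then show ?case using nn_integral_layer_ratio[OF elim t] by (cases "\<omega> \<in> A") (simp_all add: G_def)
    qed
  qed
  finally show ?thesis .
qed

lemma AE_log_running_sup_bounds:
  assumes t: "0 \<le> t"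
  shows "AE \<omega> in M. 0 \<le> ln (running_sup N t \<omega>) \<and> ln (running_sup N t \<omega>) \<le> ln (terminal_sup N \<omega>)
    \<and> 0 \<le> N t \<omega> / running_sup N t \<omega> \<and> N t \<omega> / running_sup N t \<omega> \<le> 1"
  using AE_C0_path AE_space
proof eventually_elim
  case (elim \<omega>)
  have "1 \<le> running_sup N t \<omega>" by (rule running_sup_ge_1[OF elim t])
  moreover have "running_sup N t \<omega> \<le> terminal_sup N \<omega>" "N t \<omega> \<le> running_sup N t \<omega>"
    using elim(1) t running_sup_upper[of N \<omega> t t] unfolding C0_path_def
    by (auto intro: running_sup_le_terminal_sup)
  ultimately show ?case using N_pos[OF t elim(2)] by simp
qed

lemma integral_log_increment:
  assumes t: "0 \<le> t" and A: "A \<in> sets (F t)"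
  shows "(\<integral>\<omega>. indicator A \<omega> * (ln (terminal_sup N \<omega>) - ln (running_sup N t \<omega>)) \<partial>M)
       = (\<integral>\<omega>. indicator A \<omega> * (N t \<omega> / running_sup N t \<omega>) \<partial>M)"
proof -
  have [measurable]: "running_sup N t \<in> borel_measurable M" "terminal_sup N \<in> borel_measurable M"
    "N t \<in> borel_measurable M" "A \<in> sets M"
    using running_sup_measurable[OF t] terminal_sup_measurable N_measurable[OF t] sets_F_subset[OF t A]
    by auto
  have nonneg: "AE \<omega> in M. 0 \<le> ln (terminal_sup N \<omega>) - ln (running_sup N t \<omega>) \<and>
      0 \<le> N t \<omega> / running_sup N t \<omega>"
    using AE_log_running_sup_bounds[OF t] by eventually_elim auto
  have d: "AE \<omega> in M. 0 \<le> indicator A \<omega> * (ln (terminal_sup N \<omega>) - ln (running_sup N t \<omega>))"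
    and r: "AE \<omega> in M. 0 \<le> indicator A \<omega> * (N t \<omega> / running_sup N t \<omega>)"
    using nonneg by (eventually_elim, simp add: indicator_def)+
  have "(\<integral>\<omega>. indicator A \<omega> * (ln (terminal_sup N \<omega>) - ln (running_sup N t \<omega>)) \<partial>M)
      = enn2real (\<integral>\<^sup>+\<omega>. ennreal (indicator A \<omega> * (ln (terminal_sup N \<omega>) - ln (running_sup N t \<omega>))) \<partial>M)"
    by (rule integral_eq_nn_integral[OF _ d]) measurable
  also have "\<dots> = enn2real (\<integral>\<^sup>+\<omega>. ennreal (indicator A \<omega> * (N t \<omega> / running_sup N t \<omega>)) \<partial>M)"
    using nn_integral_log_increment[OF t A] by (simp add: indicator_mult_ennreal)
  also have "\<dots> = (\<integral>\<omega>. indicator A \<omega> * (N t \<omega> / running_sup N t \<omega>) \<partial>M)"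
    by (rule integral_eq_nn_integral[OF _ r, symmetric]) measurable
  finally show ?thesis .
qed

lemma integrable_log_terminal_sup: "integrable M (\<lambda>\<omega>. ln (terminal_sup N \<omega>))"
proof (rule integrableI_nonneg)
  show "(\<lambda>\<omega>. ln (terminal_sup N \<omega>)) \<in> borel_measurable M"
    using terminal_sup_measurable by measurable
  show "AE \<omega> in M. 0 \<le> ln (terminal_sup N \<omega>)"
    using AE_log_running_sup_bounds[OF order_refl] by eventually_elim auto
  have S_0: "running_sup N 0 \<omega> = 1" if "\<omega> \<in> space M" for \<omega>
    using N_0 that by (simp add: running_sup_def)
  have "space M \<in> sets (F 0)" using sets.top[of "F 0"] space_F[of 0] by simp
  from nn_integral_log_increment[OF order_refl this]
  have "(\<integral>\<^sup>+\<omega>. ennreal (ln (terminal_sup N \<omega>)) \<partial>M) = (\<integral>\<^sup>+\<omega>. 1 \<partial>M)"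
    by (simp add: S_0 N_0 cong: nn_integral_cong)
  then show "(\<integral>\<^sup>+\<omega>. ennreal (ln (terminal_sup N \<omega>)) \<partial>M) < \<infinity>"
    by (simp add: emeasure_space_1)
qed

lemma integrable_log_running_sup: "0 \<le> t \<Longrightarrow> integrable M (\<lambda>\<omega>. ln (running_sup N t \<omega>))"
proof (rule Bochner_Integration.integrable_bound[OF integrable_log_terminal_sup])
  show "AE \<omega> in M. norm (ln (running_sup N t \<omega>)) \<le> norm (ln (terminal_sup N \<omega>))" if "0 \<le> t"
    using AE_log_running_sup_bounds[OF that] by eventually_elim auto
qed (use running_sup_measurable in measurable)

lemma integrable_running_sup_ratio: "0 \<le> t \<Longrightarrow> integrable M (\<lambda>\<omega>. N t \<omega> / running_sup N t \<omega>)"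
proof (rule Bochner_Integration.integrable_bound[of _ "\<lambda>_. 1::real"])
  show "AE \<omega> in M. norm (N t \<omega> / running_sup N t \<omega>) \<le> norm (1::real)" if "0 \<le> t"
    using AE_log_running_sup_bounds[OF that] by eventually_elim auto
qed (use running_sup_measurable N_measurable in measurable)

lemma set_integral_log_terminal_sup:
  assumes t: "0 \<le> t" and A: "A \<in> sets (F t)"
  shows "(\<integral>\<omega>\<in>A. ln (terminal_sup N \<omega>) \<partial>M)
    = (\<integral>\<omega>\<in>A. ln (running_sup N t \<omega>) + N t \<omega> / running_sup N t \<omega> \<partial>M)"
proof -
  note i = integrable_mult_indicator[OF sets_F_subset[OF t A]]
  note ln_S = integrable_log_running_sup[OF t]
  have "(\<integral>\<omega>\<in>A. ln (terminal_sup N \<omega>) \<partial>M)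
      = (\<integral>\<omega>. indicator A \<omega> * ln (running_sup N t \<omega>)
          + indicator A \<omega> * (ln (terminal_sup N \<omega>) - ln (running_sup N t \<omega>)) \<partial>M)"
    unfolding set_lebesgue_integral_def by (intro Bochner_Integration.integral_cong) (auto simp: algebra_simps)
  also have "\<dots> = (\<integral>\<omega>. indicator A \<omega> * ln (running_sup N t \<omega>) \<partial>M)
      + (\<integral>\<omega>. indicator A \<omega> * (ln (terminal_sup N \<omega>) - ln (running_sup N t \<omega>)) \<partial>M)"
    by (rule Bochner_Integration.integral_add)
      (use i[OF ln_S] i[OF Bochner_Integration.integrable_diff[OF integrable_log_terminal_sup ln_S]]
        in simp_all)
  also have "\<dots> = (\<integral>\<omega>. indicator A \<omega> * ln (running_sup N t \<omega>) \<partial>M)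
      + (\<integral>\<omega>. indicator A \<omega> * (N t \<omega> / running_sup N t \<omega>) \<partial>M)"
    by (simp only: integral_log_increment[OF t A])
  also have "\<dots> = (\<integral>\<omega>\<in>A. ln (running_sup N t \<omega>) + N t \<omega> / running_sup N t \<omega> \<partial>M)"
    using i[OF ln_S] i[OF integrable_running_sup_ratio[OF t]]
    by (simp add: set_lebesgue_integral_def distrib_left)
  finally show ?thesis .
qed

lemma cond_exp_log_terminal_sup:
  assumes t: "0 \<le> t"
  shows "AE \<omega> in M. real_cond_exp M (F t) (\<lambda>\<omega>. ln (terminal_sup N \<omega>)) \<omega>
    = ln (running_sup N t \<omega>) + N t \<omega> / running_sup N t \<omega>"
proof -
  interpret S: sigma_finite_subalgebra M "F t" by (rule sigma_finite_subalgebra_F[OF t])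
  have "(\<lambda>\<omega>. ln (running_sup N t \<omega>) + N t \<omega> / running_sup N t \<omega>) \<in> borel_measurable (F t)"
    using running_sup_measurable_F[OF t] N_measurable_F[OF t] by measurable
  then show ?thesis
    using set_integral_log_terminal_sup[OF t] integrable_log_terminal_sup
      integrable_log_running_sup[OF t] integrable_running_sup_ratio[OF t]
    by (intro S.real_cond_exp_charact) auto
qed

lemma log_running_sup_add_ratio_continuous:
  assumes "C0_path (\<lambda>s. N s \<omega>)" "\<omega> \<in> space M" "0 \<le> t"
  shows "continuous (at_right t) (\<lambda>s. ln (running_sup N s \<omega>) + N s \<omega> / running_sup N s \<omega>)"
proof -
  have c: "cadlag (\<lambda>s. N s \<omega>)" using assms(1) unfolding C0_path_def by blast
  have "((\<lambda>s. running_sup N s \<omega>) \<longlongrightarrow> running_sup N t \<omega>) (at_right t)"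
    using running_sup_continuous_at_right[of N \<omega>, OF c assms(3)] unfolding continuous_within .
  moreover have "0 < running_sup N t \<omega>" using running_sup_ge_1[OF assms] by simp
  ultimately show ?thesis
    unfolding continuous_within
    by (intro tendsto_intros cadlag_tendsto_at_right[OF c assms(3)]) auto
qed

lemma AE_cond_exp_process_eq:
  assumes mu: "cadlag_process M mu"
    and cond_exp: "\<forall>t\<ge>0. AE \<omega> in M. mu t \<omega> = real_cond_exp M (F t) (\<lambda>x. ln (terminal_sup N x)) \<omega>"
  shows "AE \<omega> in M. \<forall>t\<ge>0. mu t \<omega> = ln (running_sup N t \<omega>) + N t \<omega> / running_sup N t \<omega>"
proof -
  have "AE \<omega> in M. \<forall>q\<in>\<rat> \<inter> {0..}. mu q \<omega> = ln (running_sup N q \<omega>) + N q \<omega> / running_sup N q \<omega>"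
  proof (rule AE_ball_countable')
    fix q :: real assume "q \<in> \<rat> \<inter> {0..}"
    then have q: "0 \<le> q" by simp
    show "AE \<omega> in M. mu q \<omega> = ln (running_sup N q \<omega>) + N q \<omega> / running_sup N q \<omega>"
      using cond_exp[rule_format, OF q] cond_exp_log_terminal_sup[OF q] by eventually_elim simp
  qed (simp add: countable_rat countable_Int1)
  then show ?thesis
    using mu[unfolded cadlag_process_def] AE_C0_path AE_space
  proof eventually_elim
    case (elim \<omega>)
    show ?case
    proof (intro allI impI)
      fix t :: real assume t: "0 \<le> t"
      show "mu t \<omega> = ln (running_sup N t \<omega>) + N t \<omega> / running_sup N t \<omega>"
      proof (rule right_continuous_eq_on_rationals[where f="\<lambda>s. mu s \<omega>"
            and g="\<lambda>s. ln (running_sup N s \<omega>) + N s \<omega> / running_sup N s \<omega>"])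
        show "continuous (at_right t) (\<lambda>s. mu s \<omega>)"
          using elim(2) t unfolding cadlag_def by blast
        show "continuous (at_right t) (\<lambda>s. ln (running_sup N s \<omega>) + N s \<omega> / running_sup N s \<omega>)"
          by (rule log_running_sup_add_ratio_continuous[OF elim(3,4) t])
        show "mu q \<omega> = ln (running_sup N q \<omega>) + N q \<omega> / running_sup N q \<omega>" if "q \<in> \<rat>" "t < q" for q
          using elim(1) that t by simp
      qed
    qed
  qed
qed

end

theorem mainTheorem3:
  fixes M :: "'a measure" and F :: "real \<Rightarrow> 'a measure"
    and N mu :: "real \<Rightarrow> 'a \<Rightarrow> real"
  assumes "usual_filtration M F"
    and "class_C0 M F N"
    and "\<forall>\<omega>\<in>space M. N 0 \<omega> = 1"
    and "cadlag_process M mu"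
    and "\<forall>t\<ge>0. AE \<omega> in M.
           mu t \<omega> = real_cond_exp M (F t) (\<lambda>x. ln (terminal_sup N x)) \<omega>"
  shows "AE \<omega> in M. \<forall>t\<ge>0.
           ln (running_sup N t \<omega>) = (SUP s\<in>{0..t}. mu s \<omega>) - 1 \<and>
           running_sup N t \<omega> = exp ((SUP s\<in>{0..t}. mu s \<omega>) - 1) \<and>
           1 - N t \<omega> / running_sup N t \<omega> = (SUP s\<in>{0..t}. mu s \<omega>) - mu t \<omega>"
proof -
  interpret C0_local_martingale M F N
    using assms(1-3) by unfold_locales
  show ?thesis
    using AE_cond_exp_process_eq[OF assms(4,5)] AE_C0_path AE_space
  proof eventually_elim
    case (elim \<omega>)
    have c: "cadlag (\<lambda>s. N s \<omega>)" using elim(2) unfolding C0_path_def by blast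
    have "(SUP s\<in>{0..t}. mu s \<omega>) = ln (running_sup N t \<omega>) + 1" if t: "0 \<le> t" for t
    proof -
      have "(SUP s\<in>{0..t}. mu s \<omega>)
          = (SUP s\<in>{0..t}. ln (running_sup N s \<omega>) + N s \<omega> / running_sup N s \<omega>)"
        using elim(1) by (intro SUP_cong) auto
      then show ?thesis
        using SUP_log_running_sup_add_ratio[of N \<omega>, OF c N_pos[OF _ elim(3)] t] by simp
    qed
    moreover have "0 < running_sup N t \<omega>" if "0 \<le> t" for t
      using running_sup_ge_1[OF elim(2,3) that] by simp
    ultimately show ?case using elim(1) by simp
  qed
qed

end
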